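(* (i) Let $h_1,h_2,h_3$ be smooth functions of $(u,u_x)$ and let $m=u-u_{xx}$. The function $$k=h_1(u,u_x)m+h_2(u,u_x)m^2+h_3(u,u_x)m^3$$ satisfies $\hat E_u(k)=0$ if and only if $$h_1=u_xk_1(u^2-u_x^2)+k_0\frac{u}{u^2-u_x^2},\qquad h_2=h_3=0,$$ where $k_1$ is an arbitrary function of one variable and $k_0$ is an arbitrary constant. (ii) Any function $k$ of this form is a total $x$-derivative: $$k=D_x\Big(\tfrac12K_1(u^2-u_x^2)+\tfrac12k_0\ln\Big(\frac{u-u_x}{u+u_x}\Big)+k_0x\Big),$$ where $K_1$ is a function with $K_1'=k_1$.
   Context: $D_x$ is the total $x$-derivative acting on functions of $x$, $u$ and $x$-derivatives of $u$. The Euler operator with respect to $u$ is $\hat E_u=\partial_u-D_x\partial_{u_x}+D_x^2\partial_{u_{xx}}-D_x^3\partial_{u_{xxx}}+\cdots$. Expressions are considered on open sets where they are defined (e.g. $u^2\neq u_x^2$). *)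

theory Defs
  imports "HOL-Analysis.Analysis"
begin

text \<open>Jet space: a point is (x, U) with U i = the i-th x-derivative u_i of u
  (U 0 = u, U 1 = u_x, U 2 = u_xx, ...).\<close>

type_synonym dfun = "real \<Rightarrow> (nat \<Rightarrow> real) \<Rightarrow> real"

definition pdu :: "nat \<Rightarrow> dfun \<Rightarrow> dfun" where
  "pdu i F x U = deriv (\<lambda>t. F x (U(i := t))) (U i)"

text \<open>Total x-derivative of a differential function of order at most n:
  D_x F = F_x + sum_{i \<le> n} u_{i+1} F_{u_i}.\<close>
definition tdx :: "nat \<Rightarrow> dfun \<Rightarrow> dfun" where
  "tdx n F x U = deriv (\<lambda>t. F t U) x + (\<Sum>i\<le>n. U (Suc i) * pdu i F x U)"

text \<open>Euler operator applied to a differential function of order at most n: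
  E_u F = sum_{j \<le> n} (-1)^j D_x^j (F_{u_j})  (the terms with j > n vanish).
  All intermediate functions have order at most 2n, so tdx (2*n) is exact.\<close>
definition euler :: "nat \<Rightarrow> dfun \<Rightarrow> dfun" where
  "euler n F x U = (\<Sum>j\<le>n. (-1) ^ j * ((tdx (2 * n)) ^^ j) (pdu j F) x U)"

definition pd1 :: "(real \<times> real \<Rightarrow> real) \<Rightarrow> real \<times> real \<Rightarrow> real" where
  "pd1 f p = deriv (\<lambda>t. f (t, snd p)) (fst p)"

definition pd2 :: "(real \<times> real \<Rightarrow> real) \<Rightarrow> real \<times> real \<Rightarrow> real" where
  "pd2 f p = deriv (\<lambda>t. f (fst p, t)) (snd p)"

fun Ck2 :: "nat \<Rightarrow> (real \<times> real) set \<Rightarrow> (real \<times> real \<Rightarrow> real) \<Rightarrow> bool" where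
  "Ck2 0 S f = continuous_on S f"
| "Ck2 (Suc n) S f = ((\<forall>p\<in>S. f differentiable (at p)) \<and> Ck2 n S (pd1 f) \<and> Ck2 n S (pd2 f))"

definition smooth2_on :: "(real \<times> real) set \<Rightarrow> (real \<times> real \<Rightarrow> real) \<Rightarrow> bool" where
  "smooth2_on S f = (\<forall>n. Ck2 n S f)"

definition smooth1_on :: "real set \<Rightarrow> (real \<Rightarrow> real) \<Rightarrow> bool" where
  "smooth1_on S f = (\<forall>n. \<forall>s\<in>S. ((deriv ^^ n) f) differentiable (at s))"

definition kfun :: "(real \<times> real \<Rightarrow> real) \<Rightarrow> (real \<times> real \<Rightarrow> real) \<Rightarrow> (real \<times> real \<Rightarrow> real) \<Rightarrow> dfun" where
  "kfun h1 h2 h3 x U =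
     h1 (U 0, U 1) * (U 0 - U 2) + h2 (U 0, U 1) * (U 0 - U 2) ^ 2 + h3 (U 0, U 1) * (U 0 - U 2) ^ 3"

end

theory Submission
  imports Defs
begin

text \<open>Write \<open>p = u\<^sub>x\<close> and \<open>m = u - u\<^sub>x\<^sub>x\<close>. The Euler operator of \<open>k\<close> involves \<open>u\<^sub>x\<^sub>x\<^sub>x\<^sub>x\<close> only through
  \<open>u\<^sub>x\<^sub>x\<^sub>x\<^sub>x \<partial>\<^sup>2k/\<partial>u\<^sub>x\<^sub>x\<^sup>2 = u\<^sub>x\<^sub>x\<^sub>x\<^sub>x (2 h\<^sub>2 + 6 h\<^sub>3 m)\<close>, so \<open>E\<^sub>u(k) = 0\<close> forces
  \<open>h\<^sub>2 = h\<^sub>3 = 0\<close>. For \<open>k = h m\<close> one finds \<open>E\<^sub>u(k) = B(h) - u\<^sub>x\<^sub>x A(h)\<close> with second-order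
  expressions \<open>A, B\<close> in \<open>h(u, p)\<close>, so \<open>E\<^sub>u(k) = 0\<close> iff \<open>A(h) = B(h) = 0\<close>. These equations say
  that \<open>N = u h - p\<^sup>2 h\<^sub>u - u p h\<^sub>p\<close> has vanishing gradient and that
  \<open>R = u p h\<^sub>u + u\<^sup>2 h\<^sub>p - p h\<close> is constant along the hyperbolas \<open>u\<^sup>2 - p\<^sup>2 = \<sigma>\<close>. Since
  \<open>h = (p R + u N) / (u\<^sup>2 - p\<^sup>2)\<close>, locally \<open>h = p k\<^sub>1(u\<^sup>2 - p\<^sup>2) + k\<^sub>0 u / (u\<^sup>2 - p\<^sup>2)\<close> with
  \<open>k\<^sub>0 = N\<close> and \<open>k\<^sub>1(\<sigma>) = R / \<sigma>\<close>; the hyperbolas are parametrised by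
  \<open>u = \<plusminus>\<surd>(\<sigma> + p\<^sup>2)\<close> where \<open>u\<^sup>2 > p\<^sup>2\<close> and by \<open>p = \<plusminus>\<surd>(u\<^sup>2 - \<sigma>)\<close> where
  \<open>u\<^sup>2 < p\<^sup>2\<close>. That this form satisfies \<open>A = B = 0\<close>, and part (ii), are direct computations.\<close>

section \<open>Partial derivatives in the plane\<close>

lemma pd_derivatives:
  fixes G :: "real \<times> real \<Rightarrow> real"
  assumes "G differentiable (at (a, b))"
  shows "(G has_derivative (\<lambda>v. pd1 G (a, b) * fst v + pd2 G (a, b) * snd v)) (at (a, b))"
    and "((\<lambda>t. G (t, b)) has_real_derivative pd1 G (a, b)) (at a)"
    and "((\<lambda>t. G (a, t)) has_real_derivative pd2 G (a, b)) (at b)"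
proof -
  obtain D where D: "(G has_derivative D) (at (a, b))"
    using assms unfolding differentiable_def by blast
  have lin: "linear D" using D has_derivative_linear by blast
  have scale1: "D (h, 0) = h * D (1, 0)" and scale2: "D (0, h) = h * D (0, 1)" for h
    using linear_scale[OF lin, of h "(1, 0)"] linear_scale[OF lin, of h "(0, 1)"] by simp_all
  have lin1: "(\<lambda>h. D (h, 0)) = (*) (D (1, 0))" and lin2: "(\<lambda>h. D (0, h)) = (*) (D (0, 1))"
    by (rule ext, metis scale1 scale2 mult.commute)+
  have "((\<lambda>t. (t, b)) has_derivative (\<lambda>h. (h, 0))) (at a)"
    by (auto intro!: derivative_eq_intros)
  from diff_chain_at[OF this D]
  have d1: "((\<lambda>t. G (t, b)) has_real_derivative D (1, 0)) (at a)"
    unfolding has_field_derivative_def lin1[symmetric] by (simp add: o_def)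
  have "((\<lambda>t. (a, t)) has_derivative (\<lambda>h. (0, h))) (at b)"
    by (auto intro!: derivative_eq_intros)
  from diff_chain_at[OF this D]
  have d2: "((\<lambda>t. G (a, t)) has_real_derivative D (0, 1)) (at b)"
    unfolding has_field_derivative_def lin2[symmetric] by (simp add: o_def)
  have p1: "pd1 G (a, b) = D (1, 0)" and p2: "pd2 G (a, b) = D (0, 1)"
    unfolding pd1_def pd2_def using DERIV_imp_deriv[OF d1] DERIV_imp_deriv[OF d2] by simp_all
  have "D v = pd1 G (a, b) * fst v + pd2 G (a, b) * snd v" for v
  proof -
    have "D v = D (fst v, 0) + D (0, snd v)"
      using linear_add[OF lin, of "(fst v, 0)" "(0, snd v)"] by simp
    then show ?thesis using scale1[of "fst v"] scale2[of "snd v"] p1 p2 by (metis mult.commute)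
  qed
  then have "D = (\<lambda>v. pd1 G (a, b) * fst v + pd2 G (a, b) * snd v)" by (intro ext)
  then show "(G has_derivative (\<lambda>v. pd1 G (a, b) * fst v + pd2 G (a, b) * snd v)) (at (a, b))"
    using D by simp
  show "((\<lambda>t. G (t, b)) has_real_derivative pd1 G (a, b)) (at a)" using d1 p1 by simp
  show "((\<lambda>t. G (a, t)) has_real_derivative pd2 G (a, b)) (at b)" using d2 p2 by simp
qed

lemma smooth2_on_pd1: "smooth2_on S G \<Longrightarrow> smooth2_on S (pd1 G)"
  and smooth2_on_pd2: "smooth2_on S G \<Longrightarrow> smooth2_on S (pd2 G)"
  and smooth2_on_differentiable: "smooth2_on S G \<Longrightarrow> w \<in> S \<Longrightarrow> G differentiable (at w)"
  unfolding smooth2_on_def by (metis Ck2.simps(2))+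

lemma smooth2_on_has_derivative:
  "smooth2_on S G \<Longrightarrow> w \<in> S \<Longrightarrow>
    (G has_derivative (\<lambda>v. pd1 G w * fst v + pd2 G w * snd v)) (at w)"
  using pd_derivatives(1)[of G "fst w" "snd w"] smooth2_on_differentiable by (cases w) auto

lemma smooth2_on_DERIV_pd1:
  "smooth2_on S G \<Longrightarrow> (a, b) \<in> S \<Longrightarrow> ((\<lambda>t. G (t, b)) has_real_derivative pd1 G (a, b)) (at a)"
  using pd_derivatives(2) smooth2_on_differentiable by blast

lemma smooth2_on_DERIV_pd2:
  "smooth2_on S G \<Longrightarrow> (a, b) \<in> S \<Longrightarrow> ((\<lambda>t. G (a, t)) has_real_derivative pd2 G (a, b)) (at b)"
  using pd_derivatives(3) smooth2_on_differentiable by blast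

lemma open_slice_fst: "open (S :: (real \<times> real) set) \<Longrightarrow> open {t. (t, c) \<in> S}"
  using continuous_open_vimage[of S "\<lambda>t. (t, c)"] by (auto simp: vimage_def intro!: continuous_intros)

lemma open_slice_snd: "open (S :: (real \<times> real) set) \<Longrightarrow> open {t. (c, t) \<in> S}"
  using continuous_open_vimage[of S "\<lambda>t. (c, t)"] by (auto simp: vimage_def intro!: continuous_intros)

lemma eventually_nhds_slice_fst:
  "open (S :: (real \<times> real) set) \<Longrightarrow> (a, b) \<in> S \<Longrightarrow> eventually (\<lambda>t. (t, b) \<in> S) (nhds a)"
  using eventually_nhds_in_open[OF open_slice_fst[of S b], of a] by simp

lemma eventually_nhds_slice_snd:
  "open (S :: (real \<times> real) set) \<Longrightarrow> (a, b) \<in> S \<Longrightarrow> eventually (\<lambda>t. (a, t) \<in> S) (nhds b)"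
  using eventually_nhds_in_open[OF open_slice_snd[of S a], of b] by simp

lemma pd1_eq_DERIV_locally:
  fixes V :: "(real \<times> real) set"
  assumes "open V" "(a, b) \<in> V" "\<And>x y. (x, y) \<in> V \<Longrightarrow> G (x, y) = F x y"
    and "((\<lambda>t. F t b) has_real_derivative D) (at a)"
  shows "pd1 G (a, b) = D"
proof -
  have "eventually (\<lambda>t. G (t, b) = F t b) (nhds a)"
    using eventually_nhds_slice_fst[OF assms(1,2)] assms(3) by (auto elim!: eventually_mono)
  then have "deriv (\<lambda>t. G (t, b)) a = deriv (\<lambda>t. F t b) a" by (rule deriv_cong_ev) simp
  then show ?thesis unfolding pd1_def using DERIV_imp_deriv[OF assms(4)] by simp
qed

lemma pd2_eq_DERIV_locally:
  fixes V :: "(real \<times> real) set"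
  assumes "open V" "(a, b) \<in> V" "\<And>x y. (x, y) \<in> V \<Longrightarrow> G (x, y) = F x y"
    and "((\<lambda>t. F a t) has_real_derivative D) (at b)"
  shows "pd2 G (a, b) = D"
proof -
  have "eventually (\<lambda>t. G (a, t) = F a t) (nhds b)"
    using eventually_nhds_slice_snd[OF assms(1,2)] assms(3) by (auto elim!: eventually_mono)
  then have "deriv (\<lambda>t. G (a, t)) b = deriv (\<lambda>t. F a t) b" by (rule deriv_cong_ev) simp
  then show ?thesis unfolding pd2_def using DERIV_imp_deriv[OF assms(4)] by simp
qed

lemma DERIV_compose_pair:
  assumes "(G has_derivative (\<lambda>v. Gu * fst v + Gp * snd v)) (at (x t, y t))"
    and "(x has_real_derivative x') (at t)" and "(y has_real_derivative y') (at t)"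
  shows "((\<lambda>t. G (x t, y t)) has_real_derivative Gu * x' + Gp * y') (at t)"
proof -
  have "((\<lambda>t. (x t, y t)) has_derivative (\<lambda>h. (x' * h, y' * h))) (at t)"
    using assms(2,3) unfolding has_field_derivative_def by (intro has_derivative_Pair) auto
  from diff_chain_at[OF this assms(1)]
  have "((\<lambda>t. G (x t, y t)) has_derivative (\<lambda>h. Gu * (x' * h) + Gp * (y' * h))) (at t)"
    by (simp add: o_def)
  moreover have "(\<lambda>h. Gu * (x' * h) + Gp * (y' * h)) = (*) (Gu * x' + Gp * y')"
    by (auto simp: fun_eq_iff algebra_simps)
  ultimately show ?thesis unfolding has_field_derivative_def by simp
qed

lemma continuous_at_box_into_open:
  fixes \<Phi> :: "real \<times> real \<Rightarrow> real \<times> real"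
  assumes "open \<Omega>" "isCont \<Phi> (a, b)" "\<Phi> (a, b) \<in> \<Omega>"
  obtains \<delta> where "\<delta> > 0" "\<And>\<sigma> t. \<bar>\<sigma> - a\<bar> < \<delta> \<Longrightarrow> \<bar>t - b\<bar> < \<delta> \<Longrightarrow> \<Phi> (\<sigma>, t) \<in> \<Omega>"
proof -
  obtain r where r: "r > 0" "ball (\<Phi> (a, b)) r \<subseteq> \<Omega>" using assms(1,3) openE by blast
  obtain d where d: "d > 0" "\<And>z. dist z (a, b) < d \<Longrightarrow> dist (\<Phi> z) (\<Phi> (a, b)) < r"
    using assms(2) r(1) unfolding continuous_at_eps_delta by blast
  show ?thesis
  proof (rule that[of "d / 2"])
    fix \<sigma> t assume "\<bar>\<sigma> - a\<bar> < d / 2" "\<bar>t - b\<bar> < d / 2"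
    moreover have "dist (\<sigma>, t) (a, b) \<le> \<bar>\<sigma> - a\<bar> + \<bar>t - b\<bar>"
      using sqrt_sum_squares_le_sum_abs by (simp add: dist_Pair_Pair dist_real_def)
    ultimately have "dist (\<Phi> (\<sigma>, t)) (\<Phi> (a, b)) < r" using d by simp
    then show "\<Phi> (\<sigma>, t) \<in> \<Omega>" using r(2) by (auto simp: dist_commute)
  qed (use d in simp)
qed

lemma DERIV_zero_imp_eq_on_convex:
  fixes f :: "real \<Rightarrow> real"
  assumes "convex I" "\<And>t. t \<in> I \<Longrightarrow> (f has_real_derivative 0) (at t)" "a \<in> I" "b \<in> I"
  shows "f a = f b"
proof -
  obtain c where "\<forall>x\<in>I. f x = c"
    using has_field_derivative_zero_constant[OF assms(1)] assms(2) has_field_derivative_at_within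
    by blast
  then show ?thesis using assms(3,4) by simp
qed

lemma level_curve_tangent:
  fixes x y :: "real \<Rightarrow> real"
  assumes "open I" "t \<in> I" "\<And>t. t \<in> I \<Longrightarrow> (x t)\<^sup>2 - (y t)\<^sup>2 = \<sigma>"
    and "(x has_real_derivative x') (at t)" "(y has_real_derivative y') (at t)"
  shows "x t * x' = y t * y'"
proof -
  have "((\<lambda>t. (x t)\<^sup>2 - (y t)\<^sup>2) has_real_derivative 2 * x t * x' - 2 * y t * y') (at t)"
    using assms(4,5) by (auto intro!: derivative_eq_intros)
  moreover have "((\<lambda>t. (x t)\<^sup>2 - (y t)\<^sup>2) has_real_derivative 0) (at t)"
    by (rule has_field_derivative_transform_within_open[OF DERIV_const[of \<sigma>] assms(1,2)])
      (use assms(3) in auto)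
  ultimately have "2 * x t * x' - 2 * y t * y' = 0" by (rule DERIV_unique)
  then show ?thesis by simp
qed

section \<open>Differential functions\<close>

definition depends_below :: "nat \<Rightarrow> dfun \<Rightarrow> bool" where
  "depends_below k F \<longleftrightarrow> (\<forall>x W W'. (\<forall>i<k. W i = W' i) \<longrightarrow> F x W = F x W')"

definition x_free :: "dfun \<Rightarrow> bool" where
  "x_free F \<longleftrightarrow> (\<forall>x x' W. F x W = F x' W)"

definition eq_over :: "(real \<times> real) set \<Rightarrow> dfun \<Rightarrow> dfun \<Rightarrow> bool" where
  "eq_over S F G \<longleftrightarrow> (\<forall>x W. (W 0, W 1) \<in> S \<longrightarrow> F x W = G x W)"

lemma pdu_eq_DERIV: "((\<lambda>t. F x (W(i := t))) has_real_derivative d) (at (W i)) \<Longrightarrow> pdu i F x W = d"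
  unfolding pdu_def by (rule DERIV_imp_deriv)

lemma x_free_pdu:
  assumes "x_free F"
  shows "x_free (pdu i F)"
  unfolding x_free_def
proof (intro allI)
  fix x x' W
  have "(\<lambda>t. F x (W(i := t))) = (\<lambda>t. F x' (W(i := t)))"
    using assms unfolding x_free_def by (intro ext) blast
  then show "pdu i F x W = pdu i F x' W" unfolding pdu_def by simp
qed

lemma depends_below_pdu_zero:
  assumes "depends_below k F" "k \<le> i"
  shows "pdu i F x W = 0"
proof -
  have "(\<lambda>t. F x (W(i := t))) = (\<lambda>t. F x W)"
  proof (rule ext)
    fix t
    have "\<forall>j<k. (W(i := t)) j = W j" using assms(2) by auto
    then show "F x (W(i := t)) = F x W" using assms(1) unfolding depends_below_def by blast
  qed
  then show ?thesis unfolding pdu_def by simp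
qed

lemma depends_below_pdu:
  assumes "depends_below k F"
  shows "depends_below k (pdu i F)"
  unfolding depends_below_def
proof (intro allI impI)
  fix x W W' assume agree: "\<forall>i<k. W i = (W' i :: real)"
  show "pdu i F x W = pdu i F x W'"
  proof (cases "i < k")
    case True
    have "(\<lambda>t. F x (W(i := t))) = (\<lambda>t. F x (W'(i := t)))"
      using assms agree unfolding depends_below_def by (intro ext) auto
    then show ?thesis unfolding pdu_def using agree True by simp
  qed (use depends_below_pdu_zero[OF assms] in simp)
qed

lemma depends_below_mono: "depends_below k F \<Longrightarrow> k \<le> k' \<Longrightarrow> depends_below k' F"
  unfolding depends_below_def by auto

lemma depends_belowD: "depends_below k F \<Longrightarrow> \<forall>j<k. V j = V' j \<Longrightarrow> F x V = F x V'"
  unfolding depends_below_def by blast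

lemma tdx_x_free:
  assumes "x_free F"
  shows "tdx n F x W = (\<Sum>i\<le>n. W (Suc i) * pdu i F x W)"
proof -
  have "(\<lambda>t. F t W) = (\<lambda>t. F x W)" using assms unfolding x_free_def by auto
  then show ?thesis unfolding tdx_def by simp
qed

lemma x_free_tdx:
  assumes "x_free F"
  shows "x_free (tdx n F)"
proof -
  have "pdu i F x W = pdu i F x' W" for i x x' W
    using x_free_pdu[OF assms] unfolding x_free_def by blast
  then show ?thesis unfolding x_free_def tdx_x_free[OF assms] by (auto intro!: sum.cong)
qed

lemma depends_below_tdx:
  assumes "x_free F" "depends_below k F"
  shows "depends_below (Suc k) (tdx n F)"
  unfolding depends_below_def
proof (intro allI impI)
  fix x W W' assume agree: "\<forall>i<Suc k. W i = (W' i :: real)"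
  have "W (Suc i) * pdu i F x W = W' (Suc i) * pdu i F x W'" for i
  proof (cases "i < k")
    case True
    then show ?thesis
      using agree depends_below_pdu[OF assms(2), of i] unfolding depends_below_def by auto
  qed (use depends_below_pdu_zero[OF assms(2)] in simp)
  then show "tdx n F x W = tdx n F x W'" using tdx_x_free[OF assms(1)] by simp
qed

lemma eq_over_pdu:
  assumes "open S" "eq_over S F G"
  shows "eq_over S (pdu i F) (pdu i G)"
  unfolding eq_over_def
proof (intro allI impI)
  fix x and W :: "nat \<Rightarrow> real" assume W: "(W 0, W 1) \<in> S"
  have "eventually (\<lambda>t. ((W(i := t)) 0, (W(i := t)) 1) \<in> S) (nhds (W i))"
  proof (cases "i = 0")
    case True
    then show ?thesis using eventually_nhds_slice_fst[OF assms(1) W] by simp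
  next
    case False
    then show ?thesis using eventually_nhds_slice_snd[OF assms(1) W] W by (cases "i = 1") auto
  qed
  then have "eventually (\<lambda>t. F x (W(i := t)) = G x (W(i := t))) (nhds (W i))"
    using assms(2) unfolding eq_over_def by (auto elim!: eventually_mono)
  then show "pdu i F x W = pdu i G x W" unfolding pdu_def by (rule deriv_cong_ev) simp
qed

lemma eq_over_tdx:
  assumes "open S" "eq_over S F G"
  shows "eq_over S (tdx n F) (tdx n G)"
  unfolding eq_over_def
proof (intro allI impI)
  fix x :: real and W :: "nat \<Rightarrow> real" assume W: "(W 0, W 1) \<in> S"
  have "(\<lambda>t. F t W) = (\<lambda>t. G t W)" using assms(2) W unfolding eq_over_def by auto
  moreover have "pdu i F x W = pdu i G x W" for i
    using eq_over_pdu[OF assms] W unfolding eq_over_def by blast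
  ultimately show "tdx n F x W = tdx n G x W" unfolding tdx_def by simp
qed

lemma eq_overD: "eq_over S F G \<Longrightarrow> (W 0, W 1) \<in> S \<Longrightarrow> F x W = G x W"
  unfolding eq_over_def by blast

lemma eq_over_trans: "eq_over S F G \<Longrightarrow> eq_over S G H \<Longrightarrow> eq_over S F H"
  unfolding eq_over_def by metis

lemma affine_uxx_jet_derivatives:
  assumes S: "open S" and eq: "eq_over S F (\<lambda>x W. A (W 0) (W 1) * W 2 + B (W 0) (W 1))"
    and dA1: "\<And>a b. (a, b) \<in> S \<Longrightarrow> ((\<lambda>t. A t b) has_real_derivative Au a b) (at a)"
    and dA2: "\<And>a b. (a, b) \<in> S \<Longrightarrow> ((\<lambda>t. A a t) has_real_derivative Ap a b) (at b)"
    and dB1: "\<And>a b. (a, b) \<in> S \<Longrightarrow> ((\<lambda>t. B t b) has_real_derivative Bu a b) (at a)"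
    and dB2: "\<And>a b. (a, b) \<in> S \<Longrightarrow> ((\<lambda>t. B a t) has_real_derivative Bp a b) (at b)"
  shows "eq_over S (pdu 0 F) (\<lambda>x W. Au (W 0) (W 1) * W 2 + Bu (W 0) (W 1))"
    and "eq_over S (pdu 1 F) (\<lambda>x W. Ap (W 0) (W 1) * W 2 + Bp (W 0) (W 1))"
    and "eq_over S (pdu 2 F) (\<lambda>x W. A (W 0) (W 1))"
    and "eq_over S (tdx 4 F) (\<lambda>x W. W 1 * (Au (W 0) (W 1) * W 2 + Bu (W 0) (W 1))
            + W 2 * (Ap (W 0) (W 1) * W 2 + Bp (W 0) (W 1)) + W 3 * A (W 0) (W 1))"
proof -
  define G where "G = (\<lambda>(x::real) (W::nat\<Rightarrow>real). A (W 0) (W 1) * W 2 + B (W 0) (W 1))"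
  have eG: "eq_over S (pdu i F) (pdu i G)" for i using eq_over_pdu[OF S eq[folded G_def]] .
  have p0: "eq_over S (pdu 0 G) (\<lambda>x W. Au (W 0) (W 1) * W 2 + Bu (W 0) (W 1))"
    unfolding eq_over_def
  proof (intro allI impI)
    fix x and W :: "nat \<Rightarrow> real" assume W: "(W 0, W 1) \<in> S"
    have "((\<lambda>t. A t (W 1) * W 2 + B t (W 1)) has_real_derivative
        Au (W 0) (W 1) * W 2 + Bu (W 0) (W 1)) (at (W 0))"
      by (intro DERIV_add DERIV_cmult_right dA1 dB1 W)
    then show "pdu 0 G x W = Au (W 0) (W 1) * W 2 + Bu (W 0) (W 1)"
      by (intro pdu_eq_DERIV) (simp add: G_def)
  qed
  have p1: "eq_over S (pdu 1 G) (\<lambda>x W. Ap (W 0) (W 1) * W 2 + Bp (W 0) (W 1))"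
    unfolding eq_over_def
  proof (intro allI impI)
    fix x and W :: "nat \<Rightarrow> real" assume W: "(W 0, W 1) \<in> S"
    have "((\<lambda>t. A (W 0) t * W 2 + B (W 0) t) has_real_derivative
        Ap (W 0) (W 1) * W 2 + Bp (W 0) (W 1)) (at (W 1))"
      by (intro DERIV_add DERIV_cmult_right dA2 dB2 W)
    then show "pdu 1 G x W = Ap (W 0) (W 1) * W 2 + Bp (W 0) (W 1)"
      by (intro pdu_eq_DERIV) (simp add: G_def)
  qed
  have p2: "eq_over S (pdu 2 G) (\<lambda>x W. A (W 0) (W 1))"
    unfolding eq_over_def
  proof (intro allI impI)
    fix x and W :: "nat \<Rightarrow> real"
    have "((\<lambda>t. A (W 0) (W 1) * t + B (W 0) (W 1)) has_real_derivative A (W 0) (W 1)) (at (W 2))"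
      by (auto intro!: derivative_eq_intros)
    then show "pdu 2 G x W = A (W 0) (W 1)" by (intro pdu_eq_DERIV) (simp add: G_def)
  qed
  have p3: "pdu i G x W = 0" if "3 \<le> i" for i x W
    by (rule depends_below_pdu_zero[OF _ that]) (auto simp: depends_below_def G_def)
  show "eq_over S (pdu 0 F) (\<lambda>x W. Au (W 0) (W 1) * W 2 + Bu (W 0) (W 1))"
    and "eq_over S (pdu 1 F) (\<lambda>x W. Ap (W 0) (W 1) * W 2 + Bp (W 0) (W 1))"
    and "eq_over S (pdu 2 F) (\<lambda>x W. A (W 0) (W 1))"
    using eq_over_trans[OF eG p0] eq_over_trans[OF eG p1] eq_over_trans[OF eG p2] .
  have "x_free G" unfolding x_free_def G_def by simp
  then have "tdx 4 G x W = W 1 * pdu 0 G x W + W 2 * pdu 1 G x W + W 3 * pdu 2 G x W" for x W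
    by (simp add: tdx_x_free numeral_eq_Suc One_nat_def p3)
  then have "eq_over S (tdx 4 G) (\<lambda>x W. W 1 * (Au (W 0) (W 1) * W 2 + Bu (W 0) (W 1))
            + W 2 * (Ap (W 0) (W 1) * W 2 + Bp (W 0) (W 1)) + W 3 * A (W 0) (W 1))"
    using p0 p1 p2 unfolding eq_over_def by simp
  with eq_over_tdx[OF S eq[folded G_def]]
  show "eq_over S (tdx 4 F) (\<lambda>x W. W 1 * (Au (W 0) (W 1) * W 2 + Bu (W 0) (W 1))
            + W 2 * (Ap (W 0) (W 1) * W 2 + Bp (W 0) (W 1)) + W 3 * A (W 0) (W 1))"
    by (rule eq_over_trans)
qed

section \<open>The Euler operator of \<open>k\<close>\<close>

lemma euler_2_expand:
  "euler 2 F x U = pdu 0 F x U - tdx 4 (pdu 1 F) x U + tdx 4 (tdx 4 (pdu 2 F)) x U"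
  unfolding euler_def by (simp add: numeral_eq_Suc One_nat_def)

lemma tdx_tdx_affine_in_u4:
  assumes xP: "x_free P" and dP: "depends_below 3 P"
  shows "tdx 4 (tdx 4 P) x (U(4 := v)) = tdx 4 (tdx 4 P) x (U(4 := 0)) + v * pdu 2 P x U"
proof -
  define G where "G = tdx 4 P"
  have dQ: "depends_below 3 (pdu i P)" for i by (rule depends_below_pdu[OF dP])
  have dG: "depends_below 4 G" unfolding G_def using depends_below_tdx[OF xP dP] by simp
  have xG: "x_free G" unfolding G_def by (rule x_free_tdx[OF xP])
  have Q3: "pdu i P x W = 0" if "3 \<le> i" for i x W by (rule depends_below_pdu_zero[OF dP that])
  have Gf: "G x W = W 1 * pdu 0 P x W + W 2 * pdu 1 P x W + W 3 * pdu 2 P x W" for x W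
    unfolding G_def tdx_x_free[OF xP] using Q3 by (simp add: numeral_eq_Suc One_nat_def)
  have G3: "pdu 3 G x V = pdu 2 P x V" for V
  proof (rule pdu_eq_DERIV)
    have "\<forall>j<3. (V(3 := t)) j = V j" for t by auto
    then have "pdu i P x (V(3 := t)) = pdu i P x V" for i t using depends_belowD[OF dQ] by blast
    then have e: "(\<lambda>t. G x (V(3 := t))) =
        (\<lambda>t. V 1 * pdu 0 P x V + V 2 * pdu 1 P x V + t * pdu 2 P x V)"
      by (simp add: Gf)
    have "((\<lambda>t. V 1 * pdu 0 P x V + V 2 * pdu 1 P x V + t * pdu 2 P x V)
        has_real_derivative pdu 2 P x V) (at (V 3))"
      by (auto intro!: derivative_eq_intros)
    then show "((\<lambda>t. G x (V(3 := t))) has_real_derivative pdu 2 P x V) (at (V 3))"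
      by (simp only: e)
  qed
  have G4: "pdu 4 G x V = 0" for V by (rule depends_below_pdu_zero[OF dG]) simp
  have tG: "tdx 4 G x V
      = V 1 * pdu 0 G x V + V 2 * pdu 1 G x V + V 3 * pdu 2 G x V + V 4 * pdu 2 P x V" for V
    using tdx_x_free[OF xG, of 4 x V] G3 G4 by (simp add: numeral_eq_Suc One_nat_def)
  have "pdu i G x (U(4 := v)) = pdu i G x (U(4 := 0))" for i
    by (rule depends_belowD[OF depends_below_pdu[OF dG]]) simp
  moreover have "pdu 2 P x (U(4 := w)) = pdu 2 P x U" for w
    by (rule depends_belowD[OF dQ]) simp
  ultimately show ?thesis unfolding G_def[symmetric] tG by simp
qed

lemma euler_2_affine_in_u4:
  assumes xF: "x_free F" and dF: "depends_below 3 F"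
  shows "euler 2 F x (U(4 := v)) = euler 2 F x (U(4 := 0)) + v * pdu 2 (pdu 2 F) x U"
proof -
  have "depends_below 4 (pdu 0 F)"
    using depends_below_mono[OF depends_below_pdu[OF dF]] by simp
  moreover have "depends_below 4 (tdx 4 (pdu 1 F))"
    using depends_below_tdx[OF x_free_pdu[OF xF] depends_below_pdu[OF dF]] by simp
  ultimately have "pdu 0 F x (U(4 := v)) = pdu 0 F x (U(4 := 0))"
    and "tdx 4 (pdu 1 F) x (U(4 := v)) = tdx 4 (pdu 1 F) x (U(4 := 0))"
    by (simp_all add: depends_belowD)
  then show ?thesis
    unfolding euler_2_expand
    using tdx_tdx_affine_in_u4[OF x_free_pdu[OF xF] depends_below_pdu[OF dF],
        where x=x and U=U and v=v]
    by simp
qed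

lemma pdu2_kfun:
  "pdu 2 (kfun h1 h2 h3) x W =
    - (h1 (W 0, W 1) + 2 * h2 (W 0, W 1) * (W 0 - W 2) + 3 * h3 (W 0, W 1) * (W 0 - W 2)\<^sup>2)"
proof (rule pdu_eq_DERIV)
  have e: "(\<lambda>t. kfun h1 h2 h3 x (W(2 := t))) =
      (\<lambda>t. h1 (W 0, W 1) * (W 0 - t) + h2 (W 0, W 1) * (W 0 - t)\<^sup>2 + h3 (W 0, W 1) * (W 0 - t) ^ 3)"
    by (simp add: kfun_def)
  have "((\<lambda>t. h1 (W 0, W 1) * (W 0 - t) + h2 (W 0, W 1) * (W 0 - t)\<^sup>2 + h3 (W 0, W 1) * (W 0 - t) ^ 3)
      has_real_derivative
        - (h1 (W 0, W 1) + 2 * h2 (W 0, W 1) * (W 0 - W 2) + 3 * h3 (W 0, W 1) * (W 0 - W 2)\<^sup>2))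
      (at (W 2))"
    by (auto intro!: derivative_eq_intros simp: algebra_simps power2_eq_square)
  then show "((\<lambda>t. kfun h1 h2 h3 x (W(2 := t))) has_real_derivative
      - (h1 (W 0, W 1) + 2 * h2 (W 0, W 1) * (W 0 - W 2) + 3 * h3 (W 0, W 1) * (W 0 - W 2)\<^sup>2))
      (at (W 2))"
    by (simp only: e)
qed

lemma pdu2_pdu2_kfun:
  "pdu 2 (pdu 2 (kfun h1 h2 h3)) x W = 2 * h2 (W 0, W 1) + 6 * h3 (W 0, W 1) * (W 0 - W 2)"
proof (rule pdu_eq_DERIV)
  have e: "(\<lambda>t. pdu 2 (kfun h1 h2 h3) x (W(2 := t))) =
      (\<lambda>t. - (h1 (W 0, W 1) + 2 * h2 (W 0, W 1) * (W 0 - t) + 3 * h3 (W 0, W 1) * (W 0 - t)\<^sup>2))"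
    by (simp add: pdu2_kfun)
  have "((\<lambda>t. - (h1 (W 0, W 1) + 2 * h2 (W 0, W 1) * (W 0 - t) + 3 * h3 (W 0, W 1) * (W 0 - t)\<^sup>2))
      has_real_derivative 2 * h2 (W 0, W 1) + 6 * h3 (W 0, W 1) * (W 0 - W 2)) (at (W 2))"
    by (auto intro!: derivative_eq_intros simp: algebra_simps power2_eq_square)
  then show "((\<lambda>t. pdu 2 (kfun h1 h2 h3) x (W(2 := t))) has_real_derivative
      2 * h2 (W 0, W 1) + 6 * h3 (W 0, W 1) * (W 0 - W 2)) (at (W 2))"
    by (simp only: e)
qed

definition euler_A :: "(real \<times> real \<Rightarrow> real) \<Rightarrow> real \<times> real \<Rightarrow> real" where
  "euler_A h w = 2 * pd1 h w + fst w * pd2 (pd2 h) w + snd w * pd2 (pd1 h) w"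

definition euler_B :: "(real \<times> real \<Rightarrow> real) \<Rightarrow> real \<times> real \<Rightarrow> real" where
  "euler_B h w = fst w * pd1 h w + h w - snd w * fst w * pd1 (pd2 h) w - snd w * pd2 h w
     - (snd w)^2 * pd1 (pd1 h) w"

lemma euler_kfun_eq:
  assumes S: "open S" and hs: "smooth2_on S h" and z: "\<forall>w\<in>S. h2 w = 0 \<and> h3 w = 0"
  shows "eq_over S (euler 2 (kfun h h2 h3))
    (\<lambda>x U. euler_B h (U 0, U 1) - U 2 * euler_A h (U 0, U 1))"
proof -
  have s1: "smooth2_on S (pd1 h)" and s2: "smooth2_on S (pd2 h)"
    using smooth2_on_pd1[OF hs] smooth2_on_pd2[OF hs] .
  note D = smooth2_on_DERIV_pd1[OF hs] smooth2_on_DERIV_pd2[OF hs] smooth2_on_DERIV_pd1[OF s1]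
    smooth2_on_DERIV_pd2[OF s1] smooth2_on_DERIV_pd1[OF s2] smooth2_on_DERIV_pd2[OF s2]
  define F0 where "F0 = kfun h h2 h3"
  have e0: "eq_over S F0 (\<lambda>x W. (- h (W 0, W 1)) * W 2 + W 0 * h (W 0, W 1))"
    using z unfolding eq_over_def F0_def kfun_def by (auto simp: algebra_simps)
  note jets_F0 = affine_uxx_jet_derivatives[where A="\<lambda>a b. - h (a, b)" and B="\<lambda>a b. a * h (a, b)"
    and Au="\<lambda>a b. - pd1 h (a, b)" and Ap="\<lambda>a b. - pd2 h (a, b)"
    and Bu="\<lambda>a b. h (a, b) + a * pd1 h (a, b)" and Bp="\<lambda>a b. a * pd2 h (a, b)", OF S e0]
  have g0a: "eq_over S (pdu 0 F0)
      (\<lambda>x W. (- pd1 h (W 0, W 1)) * W 2 + (h (W 0, W 1) + W 0 * pd1 h (W 0, W 1)))"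
    by (rule jets_F0(1)) (auto intro!: derivative_eq_intros D)
  have g0b: "eq_over S (pdu 1 F0) (\<lambda>x W. (- pd2 h (W 0, W 1)) * W 2 + W 0 * pd2 h (W 0, W 1))"
    by (rule jets_F0(2)) (auto intro!: derivative_eq_intros D)
  have "eq_over S (pdu 2 F0) (\<lambda>x W. - h (W 0, W 1))"
    by (rule jets_F0(3)) (auto intro!: derivative_eq_intros D)
  then have g0c: "eq_over S (pdu 2 F0) (\<lambda>x W. 0 * W 2 + (- h (W 0, W 1)))"
    unfolding eq_over_def by simp
  have g1: "eq_over S (tdx 4 (pdu 1 F0)) (\<lambda>x W.
        W 1 * (- pd1 (pd2 h) (W 0, W 1) * W 2 + (pd2 h (W 0, W 1) + W 0 * pd1 (pd2 h) (W 0, W 1)))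
      + W 2 * (- pd2 (pd2 h) (W 0, W 1) * W 2 + W 0 * pd2 (pd2 h) (W 0, W 1))
      + W 3 * (- pd2 h (W 0, W 1)))"
    by (rule affine_uxx_jet_derivatives(4)[where A="\<lambda>a b. - pd2 h (a, b)"
          and B="\<lambda>a b. a * pd2 h (a, b)" and Au="\<lambda>a b. - pd1 (pd2 h) (a, b)"
          and Ap="\<lambda>a b. - pd2 (pd2 h) (a, b)" and Bu="\<lambda>a b. pd2 h (a, b) + a * pd1 (pd2 h) (a, b)"
          and Bp="\<lambda>a b. a * pd2 (pd2 h) (a, b)", OF S g0b])
      (auto intro!: derivative_eq_intros D)
  have "eq_over S (tdx 4 (pdu 2 F0)) (\<lambda>x W.
      W 1 * (0 * W 2 + - pd1 h (W 0, W 1)) + W 2 * (0 * W 2 + - pd2 h (W 0, W 1)) + W 3 * 0)"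
    by (rule affine_uxx_jet_derivatives(4)[where A="\<lambda>a b. 0" and B="\<lambda>a b. - h (a, b)"
          and Au="\<lambda>a b. 0" and Ap="\<lambda>a b. 0" and Bu="\<lambda>a b. - pd1 h (a, b)"
          and Bp="\<lambda>a b. - pd2 h (a, b)", OF S g0c])
      (auto intro!: derivative_eq_intros D)
  then have g2: "eq_over S (tdx 4 (pdu 2 F0))
      (\<lambda>x W. (- pd2 h (W 0, W 1)) * W 2 + (- (W 1 * pd1 h (W 0, W 1))))"
    unfolding eq_over_def by (auto simp: algebra_simps)
  have g3: "eq_over S (tdx 4 (tdx 4 (pdu 2 F0))) (\<lambda>x W.
        W 1 * (- pd1 (pd2 h) (W 0, W 1) * W 2 + - (W 1 * pd1 (pd1 h) (W 0, W 1)))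
      + W 2 * (- pd2 (pd2 h) (W 0, W 1) * W 2 + - (pd1 h (W 0, W 1) + W 1 * pd2 (pd1 h) (W 0, W 1)))
      + W 3 * (- pd2 h (W 0, W 1)))"
    by (rule affine_uxx_jet_derivatives(4)[where A="\<lambda>a b. - pd2 h (a, b)"
          and B="\<lambda>a b. - (b * pd1 h (a, b))" and Au="\<lambda>a b. - pd1 (pd2 h) (a, b)"
          and Ap="\<lambda>a b. - pd2 (pd2 h) (a, b)" and Bu="\<lambda>a b. - (b * pd1 (pd1 h) (a, b))"
          and Bp="\<lambda>a b. - (pd1 h (a, b) + b * pd2 (pd1 h) (a, b))", OF S g2])
      (auto intro!: derivative_eq_intros D)
  show ?thesis
    unfolding eq_over_def F0_def[symmetric]
  proof (intro allI impI)
    fix x :: real and U :: "nat \<Rightarrow> real" assume U: "(U 0, U 1) \<in> S"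
    note at_U = eq_overD[OF g0a U] eq_overD[OF g1 U] eq_overD[OF g3 U]
    show "euler 2 F0 x U = euler_B h (U 0, U 1) - U 2 * euler_A h (U 0, U 1)"
      unfolding euler_2_expand at_U euler_A_def euler_B_def
      by (simp add: algebra_simps power2_eq_square)
  qed
qed

lemma euler_kfun_zero_imp_quadratic_cubic_zero:
  assumes E: "\<forall>x U. (U 0, U 1) \<in> \<Omega> \<longrightarrow> euler 2 (kfun h1 h2 h3) x U = 0" and w: "w \<in> \<Omega>"
  shows "h2 w = 0 \<and> h3 w = 0"
proof -
  have "x_free (kfun h1 h2 h3)" "depends_below 3 (kfun h1 h2 h3)"
    unfolding x_free_def depends_below_def kfun_def by simp_all
  note affine = euler_2_affine_in_u4[OF this]
  have "2 * h2 w + 6 * h3 w * (fst w - c) = 0" for c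
  proof -
    define U where "U = (\<lambda>i::nat. if i = 0 then fst w else if i = 1 then snd w else c)"
    have "euler 2 (kfun h1 h2 h3) 0 (U(4 := v)) = 0" for v using E w by (simp add: U_def)
    with affine[where x=0 and U=U and v=1] have "pdu 2 (pdu 2 (kfun h1 h2 h3)) 0 U = 0" by simp
    then show ?thesis unfolding pdu2_pdu2_kfun by (simp add: U_def)
  qed
  from this[of "fst w"] this[of "fst w - 1"] show ?thesis by simp
qed

lemma euler_kfun_zero_iff_euler_AB_zero:
  assumes "open \<Omega>" "smooth2_on \<Omega> h" "\<forall>w\<in>\<Omega>. h2 w = 0 \<and> h3 w = 0"
  shows "(\<forall>x U. (U 0, U 1) \<in> \<Omega> \<longrightarrow> euler 2 (kfun h h2 h3) x U = 0)
    \<longleftrightarrow> (\<forall>w\<in>\<Omega>. euler_A h w = 0 \<and> euler_B h w = 0)"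
proof
  assume E: "\<forall>x U. (U 0, U 1) \<in> \<Omega> \<longrightarrow> euler 2 (kfun h h2 h3) x U = 0"
  show "\<forall>w\<in>\<Omega>. euler_A h w = 0 \<and> euler_B h w = 0"
  proof
    fix w assume w: "w \<in> \<Omega>"
    have "euler_B h w - c * euler_A h w = 0" for c
    proof -
      define U where "U = (\<lambda>i::nat. if i = 0 then fst w else if i = 1 then snd w else c)"
      have "(U 0, U 1) \<in> \<Omega>" using w by (simp add: U_def)
      then have "euler 2 (kfun h h2 h3) 0 U = euler_B h (U 0, U 1) - U 2 * euler_A h (U 0, U 1)"
        and "euler 2 (kfun h h2 h3) 0 U = 0"
        using E euler_kfun_eq[OF assms] unfolding eq_over_def by blast+
      then show ?thesis by (simp add: U_def)
    qed
    from this[of 0] this[of 1] show "euler_A h w = 0 \<and> euler_B h w = 0" by simp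
  qed
next
  assume "\<forall>w\<in>\<Omega>. euler_A h w = 0 \<and> euler_B h w = 0"
  then show "\<forall>x U. (U 0, U 1) \<in> \<Omega> \<longrightarrow> euler 2 (kfun h h2 h3) x U = 0"
    using euler_kfun_eq[OF assms] unfolding eq_over_def by auto
qed

section \<open>Finite-order differentiability in one variable\<close>

lemmas real_differentiable_DERIV_deriv = DERIV_deriv_iff_real_differentiable[THEN iffD2]

definition differentiable_upto :: "nat \<Rightarrow> real set \<Rightarrow> (real \<Rightarrow> real) \<Rightarrow> bool" where
  "differentiable_upto n T f \<longleftrightarrow> (\<forall>k\<le>n. \<forall>s\<in>T. (deriv ^^ k) f differentiable (at s))"

lemma smooth1_on_iff_differentiable_upto:
  "smooth1_on T f \<longleftrightarrow> (\<forall>n. differentiable_upto n T f)"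
  unfolding smooth1_on_def differentiable_upto_def by blast

lemma higher_deriv_cong_open:
  assumes "open T" "\<forall>x\<in>T. f x = g x" "s \<in> T"
  shows "(deriv ^^ k) f s = (deriv ^^ k) g s"
proof (rule higher_deriv_cong_ev)
  show "eventually (\<lambda>x. f x = g x) (nhds s)"
    unfolding eventually_nhds using assms by blast
qed simp

lemma differentiable_cong_open:
  fixes f g :: "real \<Rightarrow> real"
  assumes "open T" "s \<in> T" "\<forall>x\<in>T. f x = g x" "f differentiable (at s)"
  shows "g differentiable (at s)"
proof -
  have "(g has_real_derivative deriv f s) (at s)"
    by (rule has_field_derivative_transform_within_open[OF
          real_differentiable_DERIV_deriv[OF assms(4)] assms(1,2)])
      (use assms(3) in auto)
  then show ?thesis using real_differentiable_def by blast
qed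

lemma differentiable_upto_cong:
  assumes "open T" "differentiable_upto n T f" "\<forall>x\<in>T. f x = g x"
  shows "differentiable_upto n T g"
  unfolding differentiable_upto_def
proof (intro allI impI ballI)
  fix k s assume k: "k \<le> n" and s: "s \<in> T"
  have "\<forall>x\<in>T. (deriv ^^ k) f x = (deriv ^^ k) g x"
    using higher_deriv_cong_open[OF assms(1,3)] by blast
  then show "(deriv ^^ k) g differentiable (at s)"
    using differentiable_cong_open[OF assms(1) s] assms(2) k s unfolding differentiable_upto_def
    by blast
qed

lemma funpow_deriv_Suc: "(deriv ^^ Suc k) f = (deriv ^^ k) (deriv f)"
  by (simp add: funpow_Suc_right del: funpow.simps)

lemma differentiable_upto_Suc:
  "differentiable_upto (Suc n) T f \<longleftrightarrow>
    (\<forall>s\<in>T. f differentiable (at s)) \<and> differentiable_upto n T (deriv f)"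
proof
  assume a: "differentiable_upto (Suc n) T f"
  show "(\<forall>s\<in>T. f differentiable (at s)) \<and> differentiable_upto n T (deriv f)"
  proof
    show "\<forall>s\<in>T. f differentiable (at s)"
      using a unfolding differentiable_upto_def by (metis funpow_0 le0)
    show "differentiable_upto n T (deriv f)" unfolding differentiable_upto_def
    proof (intro allI impI ballI)
      fix k s assume "k \<le> n" "s \<in> T"
      then have "(deriv ^^ Suc k) f differentiable (at s)"
        using a unfolding differentiable_upto_def by auto
      then show "(deriv ^^ k) (deriv f) differentiable (at s)" by (simp only: funpow_deriv_Suc)
    qed
  qed
next
  assume a: "(\<forall>s\<in>T. f differentiable (at s)) \<and> differentiable_upto n T (deriv f)"
  show "differentiable_upto (Suc n) T f" unfolding differentiable_upto_def
  proof (intro allI impI ballI)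
    fix k s assume k: "k \<le> Suc n" and s: "s \<in> T"
    show "(deriv ^^ k) f differentiable (at s)"
    proof (cases k)
      case 0 then show ?thesis using a s by simp
    next
      case (Suc j)
      then have "(deriv ^^ j) (deriv f) differentiable (at s)"
        using a k s unfolding differentiable_upto_def by auto
      then show ?thesis using Suc by (simp only: funpow_deriv_Suc)
    qed
  qed
qed

lemma differentiable_upto_mono:
  "differentiable_upto n T f \<Longrightarrow> m \<le> n \<Longrightarrow> differentiable_upto m T f"
  unfolding differentiable_upto_def by auto

lemma differentiable_upto_SucD:
  "differentiable_upto (Suc n) T f \<Longrightarrow> differentiable_upto n T f \<and> differentiable_upto n T (deriv f)"
  using differentiable_upto_mono[of "Suc n"] unfolding differentiable_upto_Suc by auto

lemma differentiable_upto_const: "differentiable_upto n T (\<lambda>x. c)"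
proof (induction n arbitrary: c)
  case (Suc n)
  then show ?case unfolding differentiable_upto_Suc by simp
qed (simp add: differentiable_upto_def)

lemma differentiable_upto_id: "differentiable_upto n T (\<lambda>x. x)"
proof (cases n)
  case (Suc m)
  have "deriv (\<lambda>x. x) = (\<lambda>x. 1)" by (rule ext) (rule DERIV_imp_deriv, rule DERIV_ident)
  then show ?thesis unfolding Suc differentiable_upto_Suc using differentiable_upto_const by simp
qed (simp add: differentiable_upto_def)

lemma differentiable_upto_add:
  assumes "open T" "differentiable_upto n T f" "differentiable_upto n T g"
  shows "differentiable_upto n T (\<lambda>x. f x + g x)"
  using assms(2,3)
proof (induction n arbitrary: f g)
  case 0 then show ?case unfolding differentiable_upto_def by auto
next
  case (Suc n)
  have df: "\<forall>s\<in>T. f differentiable (at s)" and dg: "\<forall>s\<in>T. g differentiable (at s)"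
    using Suc.prems unfolding differentiable_upto_Suc by auto
  have e: "\<forall>s\<in>T. deriv f s + deriv g s = deriv (\<lambda>x. f x + g x) s"
    using df dg
    by (auto intro!: DERIV_imp_deriv[symmetric] DERIV_add real_differentiable_DERIV_deriv)
  have "differentiable_upto n T (\<lambda>x. deriv f x + deriv g x)"
    using Suc unfolding differentiable_upto_Suc by blast
  then have "differentiable_upto n T (deriv (\<lambda>x. f x + g x))"
    by (rule differentiable_upto_cong[OF assms(1) _ e])
  moreover have "\<forall>s\<in>T. (\<lambda>x. f x + g x) differentiable (at s)" using df dg by auto
  ultimately show ?case unfolding differentiable_upto_Suc by blast
qed

lemma differentiable_upto_mult:
  assumes "open T" "differentiable_upto n T f" "differentiable_upto n T g"
  shows "differentiable_upto n T (\<lambda>x. f x * g x)"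
  using assms(2,3)
proof (induction n arbitrary: f g)
  case 0 then show ?case unfolding differentiable_upto_def by auto
next
  case (Suc n)
  have df: "\<forall>s\<in>T. f differentiable (at s)" and dg: "\<forall>s\<in>T. g differentiable (at s)"
    using Suc.prems unfolding differentiable_upto_Suc by auto
  have e: "\<forall>s\<in>T. deriv f s * g s + f s * deriv g s = deriv (\<lambda>x. f x * g x) s"
  proof
    fix s assume s: "s \<in> T"
    have "((\<lambda>x. f x * g x) has_real_derivative deriv f s * g s + deriv g s * f s) (at s)"
      using df dg s by (intro DERIV_mult real_differentiable_DERIV_deriv) auto
    then show "deriv f s * g s + f s * deriv g s = deriv (\<lambda>x. f x * g x) s"
      by (subst DERIV_imp_deriv) (auto simp: mult.commute)
  qed
  note f1 = differentiable_upto_SucD[OF Suc.prems(1)]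
    and g1 = differentiable_upto_SucD[OF Suc.prems(2)]
  have "differentiable_upto n T (\<lambda>x. deriv f x * g x + f x * deriv g x)"
    using Suc.IH f1 g1 by (intro differentiable_upto_add[OF assms(1)]) auto
  then have "differentiable_upto n T (deriv (\<lambda>x. f x * g x))"
    by (rule differentiable_upto_cong[OF assms(1) _ e])
  moreover have "\<forall>s\<in>T. (\<lambda>x. f x * g x) differentiable (at s)" using df dg by auto
  ultimately show ?case unfolding differentiable_upto_Suc by blast
qed

lemma differentiable_upto_diff:
  assumes "open T" "differentiable_upto n T f" "differentiable_upto n T g"
  shows "differentiable_upto n T (\<lambda>x. f x - g x)"
proof -
  have "differentiable_upto n T (\<lambda>x. f x + (-1) * g x)"
    by (intro differentiable_upto_add differentiable_upto_mult assms differentiable_upto_const)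
  then show ?thesis by (rule differentiable_upto_cong[OF assms(1)]) auto
qed

lemma differentiable_upto_compose:
  assumes T1: "open T1" and T2: "open T2"
    and "differentiable_upto n T2 f" "differentiable_upto n T1 g" "g ` T1 \<subseteq> T2"
  shows "differentiable_upto n T1 (\<lambda>x. f (g x))"
  using assms(3-5)
proof (induction n arbitrary: f g)
  case 0
  show ?case unfolding differentiable_upto_def
  proof (intro allI impI ballI)
    fix k :: nat and s assume "k \<le> 0" "s \<in> T1"
    then have "k = 0" "g differentiable (at s)" "f differentiable (at (g s))"
      using "0.prems" unfolding differentiable_upto_def by auto
    then show "(deriv ^^ k) (\<lambda>x. f (g x)) differentiable (at s)"
      using differentiable_chain_at[of g s f] by (simp add: o_def)
  qed
next
  case (Suc n)
  have df: "\<forall>s\<in>T2. f differentiable (at s)" and dg: "\<forall>s\<in>T1. g differentiable (at s)"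
    using Suc.prems unfolding differentiable_upto_Suc by auto
  have fg: "g differentiable (at s)" "f differentiable (at (g s))" if "s \<in> T1" for s
    using df dg that Suc.prems(3) by auto
  have e: "\<forall>s\<in>T1. deriv f (g s) * deriv g s = deriv (\<lambda>x. f (g x)) s"
  proof
    fix s assume "s \<in> T1"
    with fg show "deriv f (g s) * deriv g s = deriv (\<lambda>x. f (g x)) s"
      by (intro DERIV_imp_deriv[symmetric]
          DERIV_chain2[OF real_differentiable_DERIV_deriv real_differentiable_DERIV_deriv]) auto
  qed
  note f1 = differentiable_upto_SucD[OF Suc.prems(1)]
    and g1 = differentiable_upto_SucD[OF Suc.prems(2)]
  have "differentiable_upto n T1 (\<lambda>x. deriv f (g x) * deriv g x)"
    using Suc.IH f1 g1 Suc.prems(3) by (intro differentiable_upto_mult[OF T1]) auto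
  then have "differentiable_upto n T1 (deriv (\<lambda>x. f (g x)))"
    by (rule differentiable_upto_cong[OF T1 _ e])
  moreover have "\<forall>s\<in>T1. (\<lambda>x. f (g x)) differentiable (at s)"
    using fg differentiable_chain_at[of g _ f] by (auto simp: o_def)
  ultimately show ?case unfolding differentiable_upto_Suc by blast
qed

lemma differentiable_upto_inverse:
  "differentiable_upto n {x. x \<noteq> 0} (\<lambda>x::real. inverse x)"
proof (induction n)
  case 0 then show ?case unfolding differentiable_upto_def by (auto intro!: derivative_intros)
next
  case (Suc n)
  have op: "open {x::real. x \<noteq> 0}" by (simp add: open_Collect_neq)
  have e: "\<forall>s\<in>{x. x \<noteq> 0}. (-1) * (inverse s * inverse s) = deriv (\<lambda>x::real. inverse x) s"
    by (auto intro!: DERIV_imp_deriv[symmetric] derivative_eq_intros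
        simp: power2_eq_square divide_simps)
  have "differentiable_upto n {x. x \<noteq> 0} (\<lambda>x::real. (-1) * (inverse x * inverse x))"
    by (intro differentiable_upto_mult[OF op] differentiable_upto_const Suc.IH)
  then have "differentiable_upto n {x. x \<noteq> 0} (deriv (\<lambda>x::real. inverse x))"
    by (rule differentiable_upto_cong[OF op _ e])
  moreover have "\<forall>s\<in>{x::real. x \<noteq> 0}. (\<lambda>x. inverse x) differentiable (at s)"
    by (auto intro!: derivative_intros)
  ultimately show ?case unfolding differentiable_upto_Suc by blast
qed

lemma differentiable_upto_sqrt: "differentiable_upto n {x. 0 < x} (\<lambda>x::real. sqrt x)"
proof (induction n)
  case 0
  then show ?case
    unfolding differentiable_upto_def using DERIV_real_sqrt real_differentiable_def by fastforce
next
  case (Suc n)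
  have op: "open {x::real. 0 < x}" by (simp add: open_Collect_less)
  have op2: "open {x::real. x \<noteq> 0}" by (simp add: open_Collect_neq)
  have e: "\<forall>s\<in>{x. 0 < x}. inverse (sqrt s) * (1/2) = deriv (\<lambda>x::real. sqrt x) s"
    using DERIV_imp_deriv[OF DERIV_real_sqrt] by auto
  have "differentiable_upto n {x. 0 < x} (\<lambda>x::real. inverse (sqrt x))"
    by (rule differentiable_upto_compose[OF op op2 differentiable_upto_inverse Suc.IH]) auto
  then have "differentiable_upto n {x. 0 < x} (\<lambda>x::real. inverse (sqrt x) * (1/2))"
    by (intro differentiable_upto_mult[OF op] differentiable_upto_const)
  then have "differentiable_upto n {x. 0 < x} (deriv (\<lambda>x::real. sqrt x))"
    by (rule differentiable_upto_cong[OF op _ e])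
  moreover have "\<forall>s\<in>{x::real. 0 < x}. (\<lambda>x. sqrt x) differentiable (at s)"
    using DERIV_real_sqrt real_differentiable_def by fastforce
  ultimately show ?case unfolding differentiable_upto_Suc by blast
qed

lemma differentiable_upto_slice_fst:
  assumes S: "open S" and "smooth2_on S G"
  shows "differentiable_upto n {t. (t, c) \<in> S} (\<lambda>t. G (t, c))"
  using assms(2)
proof (induction n arbitrary: G)
  case 0
  then show ?case unfolding differentiable_upto_def
    using smooth2_on_DERIV_pd1 real_differentiable_def by fastforce
next
  case (Suc n)
  have d: "\<forall>s\<in>{t. (t, c) \<in> S}. (\<lambda>t. G (t, c)) differentiable (at s)"
    using smooth2_on_DERIV_pd1[OF Suc.prems] real_differentiable_def by fastforce
  have e: "\<forall>s\<in>{t. (t, c) \<in> S}. pd1 G (s, c) = deriv (\<lambda>t. G (t, c)) s"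
    using smooth2_on_DERIV_pd1[OF Suc.prems] DERIV_imp_deriv by (metis mem_Collect_eq)
  have "differentiable_upto n {t. (t, c) \<in> S} (deriv (\<lambda>t. G (t, c)))"
    by (rule differentiable_upto_cong[OF open_slice_fst[OF S]
          Suc.IH[OF smooth2_on_pd1[OF Suc.prems]] e])
  then show ?case unfolding differentiable_upto_Suc using d by blast
qed

lemma differentiable_upto_slice_snd:
  assumes S: "open S" and "smooth2_on S G"
  shows "differentiable_upto n {t. (c, t) \<in> S} (\<lambda>t. G (c, t))"
  using assms(2)
proof (induction n arbitrary: G)
  case 0
  then show ?case unfolding differentiable_upto_def
    using smooth2_on_DERIV_pd2 real_differentiable_def by fastforce
next
  case (Suc n)
  have d: "\<forall>s\<in>{t. (c, t) \<in> S}. (\<lambda>t. G (c, t)) differentiable (at s)"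
    using smooth2_on_DERIV_pd2[OF Suc.prems] real_differentiable_def by fastforce
  have e: "\<forall>s\<in>{t. (c, t) \<in> S}. pd2 G (c, s) = deriv (\<lambda>t. G (c, t)) s"
    using smooth2_on_DERIV_pd2[OF Suc.prems] DERIV_imp_deriv by (metis mem_Collect_eq)
  have "differentiable_upto n {t. (c, t) \<in> S} (deriv (\<lambda>t. G (c, t)))"
    by (rule differentiable_upto_cong[OF open_slice_snd[OF S]
          Suc.IH[OF smooth2_on_pd2[OF Suc.prems]] e])
  then show ?case unfolding differentiable_upto_Suc using d by blast
qed

section \<open>Integrating the equations \<open>A = B = 0\<close>\<close>

definition invariant_N :: "(real \<times> real \<Rightarrow> real) \<Rightarrow> real \<times> real \<Rightarrow> real" where
  "invariant_N h z = fst z * h z - (snd z)\<^sup>2 * pd1 h z - snd z * fst z * pd2 h z"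

definition invariant_R :: "(real \<times> real \<Rightarrow> real) \<Rightarrow> real \<times> real \<Rightarrow> real" where
  "invariant_R h z = fst z * snd z * pd1 h z + (fst z)\<^sup>2 * pd2 h z - snd z * h z"

definition invariant_R_du :: "(real \<times> real \<Rightarrow> real) \<Rightarrow> real \<times> real \<Rightarrow> real" where
  "invariant_R_du h w =
     fst w * snd w * pd1 (pd1 h) w + 2 * fst w * pd2 h w + (fst w)\<^sup>2 * pd1 (pd2 h) w"

definition invariant_R_dp :: "(real \<times> real \<Rightarrow> real) \<Rightarrow> real \<times> real \<Rightarrow> real" where
  "invariant_R_dp h w = fst w * pd1 h w + fst w * snd w * pd2 (pd1 h) w
     + (fst w)\<^sup>2 * pd2 (pd2 h) w - h w - snd w * pd2 h w"

text \<open>The mixed partials \<open>pd1 (pd2 h)\<close> and \<open>pd2 (pd1 h)\<close> are never identified; \<^const>\<open>euler_A\<close>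
  and \<^const>\<open>euler_B\<close> are written so that the identities below hold without symmetry of
  second derivatives.\<close>

lemma has_derivative_invariant_N:
  assumes hs: "smooth2_on S h" and w: "w \<in> S"
  shows "(invariant_N h has_derivative
    (\<lambda>v. euler_B h w * fst v + (- snd w * euler_A h w) * snd v)) (at w)"
proof -
  have s1: "smooth2_on S (pd1 h)" and s2: "smooth2_on S (pd2 h)"
    using smooth2_on_pd1[OF hs] smooth2_on_pd2[OF hs] .
  have e: "invariant_N h = (\<lambda>z. fst z * h z - (snd z)\<^sup>2 * pd1 h z - snd z * fst z * pd2 h z)"
    by (rule ext) (simp add: invariant_N_def)
  show ?thesis unfolding e
    by (auto intro!: derivative_eq_intros smooth2_on_has_derivative[OF hs w]
        smooth2_on_has_derivative[OF s1 w] smooth2_on_has_derivative[OF s2 w]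
        simp: fun_eq_iff euler_A_def euler_B_def algebra_simps power2_eq_square)
qed

lemma has_derivative_invariant_R:
  assumes hs: "smooth2_on S h" and w: "w \<in> S"
  shows "(invariant_R h has_derivative
    (\<lambda>v. invariant_R_du h w * fst v + invariant_R_dp h w * snd v)) (at w)"
proof -
  have s1: "smooth2_on S (pd1 h)" and s2: "smooth2_on S (pd2 h)"
    using smooth2_on_pd1[OF hs] smooth2_on_pd2[OF hs] .
  have e: "invariant_R h = (\<lambda>z. fst z * snd z * pd1 h z + (fst z)\<^sup>2 * pd2 h z - snd z * h z)"
    by (rule ext) (simp add: invariant_R_def)
  show ?thesis unfolding e
    by (auto intro!: derivative_eq_intros smooth2_on_has_derivative[OF hs w]
        smooth2_on_has_derivative[OF s1 w] smooth2_on_has_derivative[OF s2 w]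
        simp: fun_eq_iff invariant_R_du_def invariant_R_dp_def algebra_simps power2_eq_square)
qed

lemma invariant_R_du_dp_eq:
  "snd w * invariant_R_du h w + fst w * invariant_R_dp h w
     = fst w * (fst w * euler_A h w - euler_B h w)"
  unfolding invariant_R_du_def invariant_R_dp_def euler_A_def euler_B_def
  by (simp add: algebra_simps power2_eq_square)

lemma eq_by_invariants:
  "(fst z)\<^sup>2 - (snd z)\<^sup>2 \<noteq> 0 \<Longrightarrow>
    h z = (snd z * invariant_R h z + fst z * invariant_N h z) / ((fst z)\<^sup>2 - (snd z)\<^sup>2)"
  unfolding invariant_R_def invariant_N_def by (simp add: field_simps power2_eq_square)

lemma DERIV_invariant_N_along_curve:
  assumes "smooth2_on \<Omega> h" "(x t, y t) \<in> \<Omega>" "euler_A h (x t, y t) = 0" "euler_B h (x t, y t) = 0"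
    and "(x has_real_derivative x') (at t)" "(y has_real_derivative y') (at t)"
  shows "((\<lambda>t. invariant_N h (x t, y t)) has_real_derivative 0) (at t)"
  using DERIV_compose_pair[OF has_derivative_invariant_N[OF assms(1,2)] assms(5,6)] assms(3,4)
  by simp

lemma DERIV_invariant_R_along_level_curve:
  assumes hs: "smooth2_on \<Omega> h" and w: "(x t, y t) \<in> \<Omega>"
    and AB: "euler_A h (x t, y t) = 0" "euler_B h (x t, y t) = 0"
    and dx: "(x has_real_derivative x') (at t)" and dy: "(y has_real_derivative y') (at t)"
    and tangent: "x t * x' = y t * y'" and off_cone: "(x t)\<^sup>2 \<noteq> (y t)\<^sup>2"
  shows "((\<lambda>t. invariant_R h (x t, y t)) has_real_derivative 0) (at t)"
proof -
  define u p where "u = x t" and "p = y t"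
  have RI: "p * invariant_R_du h (u, p) + u * invariant_R_dp h (u, p) = 0"
    using invariant_R_du_dp_eq[of "(u, p)" h] AB unfolding u_def p_def by simp
  have "invariant_R_du h (u, p) * x' + invariant_R_dp h (u, p) * y' = 0"
  proof (cases "u = 0")
    case True
    then have "p \<noteq> 0" using off_cone unfolding u_def p_def by auto
    then have "y' = 0" "invariant_R_du h (u, p) = 0"
      using tangent RI True unfolding u_def p_def by auto
    then show ?thesis by simp
  next
    case False
    have "u * (invariant_R_du h (u, p) * x' + invariant_R_dp h (u, p) * y')
        = y' * (p * invariant_R_du h (u, p) + u * invariant_R_dp h (u, p))"
      using tangent unfolding u_def p_def by (simp add: algebra_simps)
    then show ?thesis using RI False by simp
  qed
  then show ?thesis
    using DERIV_compose_pair[OF has_derivative_invariant_R[OF hs w] dx dy]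
    unfolding u_def p_def by simp
qed

definition hyperbolic_form_near :: "(real \<times> real) set \<Rightarrow> (real \<times> real \<Rightarrow> real) \<Rightarrow> real \<times> real \<Rightarrow> bool"
  where "hyperbolic_form_near \<Omega> h w \<longleftrightarrow> (\<exists>V. open V \<and> w \<in> V \<and> V \<subseteq> \<Omega> \<and>
    (\<exists>(k1 :: real \<Rightarrow> real) (k0 :: real) T. open T \<and> (\<lambda>(a, b). a\<^sup>2 - b\<^sup>2) ` V \<subseteq> T \<and>
      smooth1_on T k1 \<and> (\<forall>(a, b)\<in>V. h (a, b) = b * k1 (a\<^sup>2 - b\<^sup>2) + k0 * a / (a\<^sup>2 - b\<^sup>2))))"

text \<open>A chart \<open>(\<sigma>, t) \<mapsto> (X \<sigma> t, Y \<sigma> t)\<close> on \<open>J \<times> I\<close> in which \<open>\<sigma> = u\<^sup>2 - p\<^sup>2\<close>: \<open>N\<close> is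
  constant on its image and \<open>R\<close> depends on \<open>\<sigma>\<close> only.\<close>

lemma hyperbolic_form_near_from_chart:
  fixes X Y :: "real \<Rightarrow> real \<Rightarrow> real"
  assumes hs: "smooth2_on \<Omega> h" and AB: "\<forall>w\<in>\<Omega>. euler_A h w = 0 \<and> euler_B h w = 0"
    and J: "convex J" "open J" "0 \<notin> J" and I: "convex I" "open I" "\<tau> \<in> I"
    and chart: "\<And>\<sigma> t. \<sigma> \<in> J \<Longrightarrow> t \<in> I \<Longrightarrow> (X \<sigma> t, Y \<sigma> t) \<in> \<Omega>"
    and level: "\<And>\<sigma> t. \<sigma> \<in> J \<Longrightarrow> t \<in> I \<Longrightarrow> (X \<sigma> t)\<^sup>2 - (Y \<sigma> t)\<^sup>2 = \<sigma>"
    and dX: "\<And>\<sigma> t. \<sigma> \<in> J \<Longrightarrow> t \<in> I \<Longrightarrow> X \<sigma> differentiable (at t)"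
    and dY: "\<And>\<sigma> t. \<sigma> \<in> J \<Longrightarrow> t \<in> I \<Longrightarrow> Y \<sigma> differentiable (at t)"
    and dX0: "\<And>\<sigma>. \<sigma> \<in> J \<Longrightarrow> (\<lambda>\<sigma>. X \<sigma> \<tau>) differentiable (at \<sigma>)"
    and dY0: "\<And>\<sigma>. \<sigma> \<in> J \<Longrightarrow> (\<lambda>\<sigma>. Y \<sigma> \<tau>) differentiable (at \<sigma>)"
    and V: "open V" "w0 \<in> V" "\<And>z. z \<in> V \<Longrightarrow> \<exists>\<sigma>\<in>J. \<exists>t\<in>I. z = (X \<sigma> t, Y \<sigma> t)"
    and smooth_R: "\<And>n. differentiable_upto n J (\<lambda>\<sigma>. invariant_R h (X \<sigma> \<tau>, Y \<sigma> \<tau>))"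
  shows "hyperbolic_form_near \<Omega> h w0"
proof -
  note DERIV_deriv = real_differentiable_DERIV_deriv
  have AB': "euler_A h (X \<sigma> t, Y \<sigma> t) = 0" "euler_B h (X \<sigma> t, Y \<sigma> t) = 0"
    if "\<sigma> \<in> J" "t \<in> I" for \<sigma> t
    using AB chart[OF that] by auto
  have N_t: "invariant_N h (X \<sigma> t, Y \<sigma> t) = invariant_N h (X \<sigma> \<tau>, Y \<sigma> \<tau>)"
    if \<sigma>: "\<sigma> \<in> J" and t: "t \<in> I" for \<sigma> t
  proof (rule DERIV_zero_imp_eq_on_convex[OF I(1) _ t I(3)])
    fix t assume t: "t \<in> I"
    show "((\<lambda>t. invariant_N h (X \<sigma> t, Y \<sigma> t)) has_real_derivative 0) (at t)"
      by (rule DERIV_invariant_N_along_curve[OF hs chart[OF \<sigma> t] AB'[OF \<sigma> t]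
            DERIV_deriv[OF dX[OF \<sigma> t]] DERIV_deriv[OF dY[OF \<sigma> t]]])
  qed
  have N_\<sigma>: "invariant_N h (X \<sigma> \<tau>, Y \<sigma> \<tau>) = invariant_N h (X \<sigma>' \<tau>, Y \<sigma>' \<tau>)"
    if "\<sigma> \<in> J" "\<sigma>' \<in> J" for \<sigma> \<sigma>'
  proof (rule DERIV_zero_imp_eq_on_convex[OF J(1) _ that])
    fix \<sigma> assume \<sigma>: "\<sigma> \<in> J"
    show "((\<lambda>\<sigma>. invariant_N h (X \<sigma> \<tau>, Y \<sigma> \<tau>)) has_real_derivative 0) (at \<sigma>)"
      by (rule DERIV_invariant_N_along_curve[OF hs chart[OF \<sigma> I(3)] AB'[OF \<sigma> I(3)]
            DERIV_deriv[OF dX0[OF \<sigma>]] DERIV_deriv[OF dY0[OF \<sigma>]]])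
  qed
  have R_t: "invariant_R h (X \<sigma> t, Y \<sigma> t) = invariant_R h (X \<sigma> \<tau>, Y \<sigma> \<tau>)"
    if \<sigma>: "\<sigma> \<in> J" and t: "t \<in> I" for \<sigma> t
  proof (rule DERIV_zero_imp_eq_on_convex[OF I(1) _ t I(3)])
    fix t assume t: "t \<in> I"
    note dx = DERIV_deriv[OF dX[OF \<sigma> t]] and dy = DERIV_deriv[OF dY[OF \<sigma> t]]
    have "X \<sigma> t * deriv (X \<sigma>) t = Y \<sigma> t * deriv (Y \<sigma>) t"
      by (rule level_curve_tangent[OF I(2) t level[OF \<sigma>] dx dy])
    moreover have "(X \<sigma> t)\<^sup>2 \<noteq> (Y \<sigma> t)\<^sup>2" using level[OF \<sigma> t] J(3) \<sigma> by auto
    ultimately show "((\<lambda>t. invariant_R h (X \<sigma> t, Y \<sigma> t)) has_real_derivative 0) (at t)"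
      by (rule DERIV_invariant_R_along_level_curve[OF hs chart[OF \<sigma> t] AB'[OF \<sigma> t] dx dy])
  qed
  define k0 where "k0 = invariant_N h w0"
  define k1 where "k1 = (\<lambda>\<sigma>. invariant_R h (X \<sigma> \<tau>, Y \<sigma> \<tau>) * inverse \<sigma>)"
  have N: "invariant_N h (X \<sigma> t, Y \<sigma> t) = k0" if "\<sigma> \<in> J" "t \<in> I" for \<sigma> t
  proof -
    obtain \<sigma>0 t1 where st1: "\<sigma>0 \<in> J" "t1 \<in> I" "w0 = (X \<sigma>0 t1, Y \<sigma>0 t1)"
      using V(3)[OF V(2)] by blast
    have "invariant_N h (X \<sigma> t, Y \<sigma> t) = invariant_N h (X \<sigma> \<tau>, Y \<sigma> \<tau>)" by (rule N_t[OF that])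
    also have "\<dots> = invariant_N h (X \<sigma>0 \<tau>, Y \<sigma>0 \<tau>)" by (rule N_\<sigma>[OF that(1) st1(1)])
    also have "\<dots> = invariant_N h w0" unfolding st1(3) by (rule N_t[OF st1(1,2), symmetric])
    finally show ?thesis unfolding k0_def .
  qed
  have "differentiable_upto n J k1" for n
    unfolding k1_def
    by (rule differentiable_upto_mult[OF J(2) smooth_R differentiable_upto_compose[OF J(2) _
          differentiable_upto_inverse differentiable_upto_id]])
      (use J(3) in \<open>auto simp: open_Collect_neq\<close>)
  then have "smooth1_on J k1" unfolding smooth1_on_iff_differentiable_upto by blast
  moreover have "(\<lambda>(a, b). a\<^sup>2 - b\<^sup>2) ` V \<subseteq> J"
  proof
    fix s assume "s \<in> (\<lambda>(a, b). a\<^sup>2 - b\<^sup>2) ` V"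
    then obtain z where z: "z \<in> V" "s = (fst z)\<^sup>2 - (snd z)\<^sup>2" by auto
    obtain \<sigma> t where "\<sigma> \<in> J" "t \<in> I" "z = (X \<sigma> t, Y \<sigma> t)" using V(3)[OF z(1)] by blast
    then show "s \<in> J" using z(2) level by simp
  qed
  moreover have "V \<subseteq> \<Omega>"
  proof
    fix z assume "z \<in> V"
    then obtain \<sigma> t where "\<sigma> \<in> J" "t \<in> I" "z = (X \<sigma> t, Y \<sigma> t)" using V(3) by blast
    then show "z \<in> \<Omega>" using chart by simp
  qed
  moreover have "\<forall>(a, b)\<in>V. h (a, b) = b * k1 (a\<^sup>2 - b\<^sup>2) + k0 * a / (a\<^sup>2 - b\<^sup>2)"
  proof (clarify)
    fix a b assume ab: "(a, b) \<in> V"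
    obtain \<sigma> t where st: "\<sigma> \<in> J" "t \<in> I" "(a, b) = (X \<sigma> t, Y \<sigma> t)" using V(3)[OF ab] by blast
    have \<sigma>: "a\<^sup>2 - b\<^sup>2 = \<sigma>" "\<sigma> \<noteq> 0" using level[OF st(1,2)] st J(3) by auto
    have "h (a, b) = (b * invariant_R h (a, b) + a * invariant_N h (a, b)) / (a\<^sup>2 - b\<^sup>2)"
      using eq_by_invariants[of "(a, b)" h] \<sigma> by simp
    also have "\<dots> = b * k1 (a\<^sup>2 - b\<^sup>2) + k0 * a / (a\<^sup>2 - b\<^sup>2)"
      using N[OF st(1,2)] R_t[OF st(1,2)] st(3) \<sigma> unfolding k1_def by (simp add: field_simps)
    finally show "h (a, b) = b * k1 (a\<^sup>2 - b\<^sup>2) + k0 * a / (a\<^sup>2 - b\<^sup>2)" .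
  qed
  ultimately show ?thesis
    unfolding hyperbolic_form_near_def using V(1,2) J(2)
    by (intro exI[of _ V] exI[of _ k1] exI[of _ k0] exI[of _ J] conjI)
qed

lemma differentiable_upto_invariant_R_slice_fst:
  assumes "open \<Omega>" "smooth2_on \<Omega> h" "open J" "\<And>n. differentiable_upto n J x"
    and "x ` J \<subseteq> {t. (t, c) \<in> \<Omega>}"
  shows "differentiable_upto n J (\<lambda>\<sigma>. invariant_R h (x \<sigma>, c))"
proof -
  have G: "differentiable_upto n J (\<lambda>\<sigma>. G (x \<sigma>, c))" if "smooth2_on \<Omega> G" for G
    by (rule differentiable_upto_compose[OF assms(3) open_slice_fst[OF assms(1)]
          differentiable_upto_slice_fst[OF assms(1) that] assms(4,5)])
  have "differentiable_upto n J
      (\<lambda>\<sigma>. x \<sigma> * c * pd1 h (x \<sigma>, c) + x \<sigma> * x \<sigma> * pd2 h (x \<sigma>, c) - c * h (x \<sigma>, c))"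
    by (intro differentiable_upto_diff differentiable_upto_add differentiable_upto_mult assms(3,4)
        differentiable_upto_const G assms(2) smooth2_on_pd1 smooth2_on_pd2)
  then show ?thesis
    by (rule differentiable_upto_cong[OF assms(3)]) (simp add: invariant_R_def power2_eq_square)
qed

lemma differentiable_upto_invariant_R_slice_snd:
  assumes "open \<Omega>" "smooth2_on \<Omega> h" "open J" "\<And>n. differentiable_upto n J y"
    and "y ` J \<subseteq> {t. (c, t) \<in> \<Omega>}"
  shows "differentiable_upto n J (\<lambda>\<sigma>. invariant_R h (c, y \<sigma>))"
proof -
  have G: "differentiable_upto n J (\<lambda>\<sigma>. G (c, y \<sigma>))" if "smooth2_on \<Omega> G" for G
    by (rule differentiable_upto_compose[OF assms(3) open_slice_snd[OF assms(1)]
          differentiable_upto_slice_snd[OF assms(1) that] assms(4,5)])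
  have "differentiable_upto n J
      (\<lambda>\<sigma>. c * y \<sigma> * pd1 h (c, y \<sigma>) + c * c * pd2 h (c, y \<sigma>) - y \<sigma> * h (c, y \<sigma>))"
    by (intro differentiable_upto_diff differentiable_upto_add differentiable_upto_mult assms(3,4)
        differentiable_upto_const G assms(2) smooth2_on_pd1 smooth2_on_pd2)
  then show ?thesis
    by (rule differentiable_upto_cong[OF assms(3)]) (simp add: invariant_R_def power2_eq_square)
qed

lemma sgn_mult_abs_eq: "(e::real) = 1 \<or> e = -1 \<Longrightarrow> 0 < e * x \<Longrightarrow> e * \<bar>x\<bar> = x"
  by (auto simp: abs_if mult_less_0_iff zero_less_mult_iff)

lemma hyperbolic_form_near_u_dominant:
  fixes \<Omega> :: "(real \<times> real) set"
  assumes S: "open \<Omega>" and hs: "smooth2_on \<Omega> h"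
    and AB: "\<forall>w\<in>\<Omega>. euler_A h w = 0 \<and> euler_B h w = 0"
    and w: "(u0, q0) \<in> \<Omega>" and pos: "0 < u0\<^sup>2 - q0\<^sup>2"
  shows "hyperbolic_form_near \<Omega> h (u0, q0)"
proof -
  define s0 where "s0 = u0\<^sup>2 - q0\<^sup>2"
  define e where "e = sgn u0"
  have e1: "e = 1 \<or> e = -1" "0 < e * u0" using pos unfolding e_def by (auto simp: sgn_if)
  have e2: "e * e = 1" using e1 by auto
  define \<Phi> where "\<Phi> = (\<lambda>z::real \<times> real. (e * sqrt (fst z + (snd z)\<^sup>2), snd z))"
  have "\<Phi> (s0, q0) = (u0, q0)" using sgn_mult_abs_eq[OF e1] unfolding \<Phi>_def s0_def by simp
  moreover have "isCont \<Phi> (s0, q0)" unfolding \<Phi>_def by (intro continuous_intros)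
  ultimately obtain \<delta> where \<delta>: "\<delta> > 0"
    "\<And>\<sigma> t. \<bar>\<sigma> - s0\<bar> < \<delta> \<Longrightarrow> \<bar>t - q0\<bar> < \<delta> \<Longrightarrow> (e * sqrt (\<sigma> + t\<^sup>2), t) \<in> \<Omega>"
    using continuous_at_box_into_open[OF S, where \<Phi>=\<Phi> and a=s0 and b=q0] w unfolding \<Phi>_def by auto
  define \<epsilon> where "\<epsilon> = min \<delta> (s0 / 2)"
  define J I where "J = ball s0 \<epsilon>" and "I = ball q0 \<epsilon>"
  have inJ: "\<sigma> \<in> J \<longleftrightarrow> \<bar>\<sigma> - s0\<bar> < \<epsilon>" and inI: "t \<in> I \<longleftrightarrow> \<bar>t - q0\<bar> < \<epsilon>" for \<sigma> t
    unfolding J_def I_def by (simp_all add: dist_real_def abs_minus_commute)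
  have \<epsilon>: "\<epsilon> > 0" using \<delta> pos unfolding \<epsilon>_def s0_def by auto
  have J_pos: "0 < \<sigma>" if "\<sigma> \<in> J" for \<sigma> using that unfolding inJ \<epsilon>_def by linarith
  have sq: "0 < \<sigma> + t\<^sup>2" if "\<sigma> \<in> J" for \<sigma> t using J_pos[OF that] by (simp add: add_pos_nonneg)
  define V where "V = {z::real \<times> real. 0 < e * fst z \<and> \<bar>(fst z)\<^sup>2 - (snd z)\<^sup>2 - s0\<bar> < \<epsilon>
    \<and> \<bar>snd z - q0\<bar> < \<epsilon>}"
  show ?thesis
  proof (rule hyperbolic_form_near_from_chart[OF hs AB _ _ _ _ _ _ _ _ _ _ _ _ _ _ _ _,
        where X="\<lambda>\<sigma> t. e * sqrt (\<sigma> + t\<^sup>2)" and Y="\<lambda>\<sigma> t. t" and J=J and I=I and \<tau>=q0 and V=V])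
    show "convex J" "open J" "convex I" "open I" "q0 \<in> I"
      using \<epsilon> unfolding J_def I_def by auto
    show "0 \<notin> J" using J_pos[of 0] by blast
    show "(e * sqrt (\<sigma> + t\<^sup>2), t) \<in> \<Omega>" if "\<sigma> \<in> J" "t \<in> I" for \<sigma> t
      using \<delta>(2) that unfolding inJ inI \<epsilon>_def by auto
    show "(e * sqrt (\<sigma> + t\<^sup>2))\<^sup>2 - t\<^sup>2 = \<sigma>" if "\<sigma> \<in> J" "t \<in> I" for \<sigma> t
      using sq[OF that(1), of t] e2 by (simp add: power_mult_distrib power2_eq_square[of e])
    show "(\<lambda>t. e * sqrt (\<sigma> + t\<^sup>2)) differentiable (at t)"
      and "(\<lambda>\<sigma>. e * sqrt (\<sigma> + q0\<^sup>2)) differentiable (at \<sigma>)" if "\<sigma> \<in> J" for \<sigma> t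
      using sq[OF that, of t] sq[OF that, of q0]
      by (auto intro!: derivative_eq_intros DERIV_real_sqrt_generic simp: real_differentiable_def)
    show "(\<lambda>t. t) differentiable (at t)" "(\<lambda>\<sigma>. q0) differentiable (at \<sigma>)" for \<sigma> t :: real
      by simp_all
    show "open V" unfolding V_def by (intro open_Collect_conj open_Collect_less continuous_intros)
    show "(u0, q0) \<in> V" unfolding V_def s0_def using e1 \<epsilon> by simp
    show "\<exists>\<sigma>\<in>J. \<exists>t\<in>I. z = (e * sqrt (\<sigma> + t\<^sup>2), t)" if "z \<in> V" for z
    proof (intro bexI)
      have "e * sqrt ((fst z)\<^sup>2) = fst z"
        using sgn_mult_abs_eq[OF e1(1)] that unfolding V_def by simp
      then show "z = (e * sqrt ((fst z)\<^sup>2 - (snd z)\<^sup>2 + (snd z)\<^sup>2), snd z)" by (cases z) simp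
    qed (use that in \<open>auto simp: V_def inJ inI\<close>)
    have x: "differentiable_upto n J (\<lambda>\<sigma>. e * sqrt (\<sigma> + q0\<^sup>2))" for n
      by (rule differentiable_upto_mult[OF _ differentiable_upto_const
            differentiable_upto_compose[OF _ open_Collect_less differentiable_upto_sqrt
              differentiable_upto_add[OF _ differentiable_upto_id differentiable_upto_const]]])
        (use sq in \<open>auto simp: J_def intro: continuous_intros\<close>)
    show "differentiable_upto n J (\<lambda>\<sigma>. invariant_R h (e * sqrt (\<sigma> + q0\<^sup>2), q0))" for n
      by (rule differentiable_upto_invariant_R_slice_fst[OF S hs _ x])
        (use \<delta>(2) \<epsilon> in \<open>auto simp: J_def \<epsilon>_def dist_real_def abs_minus_commute\<close>)
  qed
qed

lemma hyperbolic_form_near_p_dominant: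
  fixes \<Omega> :: "(real \<times> real) set"
  assumes S: "open \<Omega>" and hs: "smooth2_on \<Omega> h"
    and AB: "\<forall>w\<in>\<Omega>. euler_A h w = 0 \<and> euler_B h w = 0"
    and w: "(u0, q0) \<in> \<Omega>" and neg: "u0\<^sup>2 - q0\<^sup>2 < 0"
  shows "hyperbolic_form_near \<Omega> h (u0, q0)"
proof -
  define s0 where "s0 = u0\<^sup>2 - q0\<^sup>2"
  define e where "e = sgn q0"
  have e1: "e = 1 \<or> e = -1" "0 < e * q0" using neg unfolding e_def by (auto simp: sgn_if)
  have e2: "e * e = 1" using e1 by auto
  define \<Phi> where "\<Phi> = (\<lambda>z::real \<times> real. (snd z, e * sqrt ((snd z)\<^sup>2 - fst z)))"
  have "\<Phi> (s0, u0) = (u0, q0)" using sgn_mult_abs_eq[OF e1] unfolding \<Phi>_def s0_def by simp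
  moreover have "isCont \<Phi> (s0, u0)" unfolding \<Phi>_def by (intro continuous_intros)
  ultimately obtain \<delta> where \<delta>: "\<delta> > 0"
    "\<And>\<sigma> t. \<bar>\<sigma> - s0\<bar> < \<delta> \<Longrightarrow> \<bar>t - u0\<bar> < \<delta> \<Longrightarrow> (t, e * sqrt (t\<^sup>2 - \<sigma>)) \<in> \<Omega>"
    using continuous_at_box_into_open[OF S, where \<Phi>=\<Phi> and a=s0 and b=u0] w unfolding \<Phi>_def by auto
  define \<epsilon> where "\<epsilon> = min \<delta> (- s0 / 2)"
  define J I where "J = ball s0 \<epsilon>" and "I = ball u0 \<epsilon>"
  have inJ: "\<sigma> \<in> J \<longleftrightarrow> \<bar>\<sigma> - s0\<bar> < \<epsilon>" and inI: "t \<in> I \<longleftrightarrow> \<bar>t - u0\<bar> < \<epsilon>" for \<sigma> t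
    unfolding J_def I_def by (simp_all add: dist_real_def abs_minus_commute)
  have \<epsilon>: "\<epsilon> > 0" using \<delta> neg unfolding \<epsilon>_def s0_def by auto
  have J_neg: "\<sigma> < 0" if "\<sigma> \<in> J" for \<sigma> using that unfolding inJ \<epsilon>_def by linarith
  have sq: "0 < t\<^sup>2 - \<sigma>" if "\<sigma> \<in> J" for \<sigma> t
    using J_neg[OF that] zero_le_power2[of t] by linarith
  define V where "V = {z::real \<times> real. 0 < e * snd z \<and> \<bar>(fst z)\<^sup>2 - (snd z)\<^sup>2 - s0\<bar> < \<epsilon>
    \<and> \<bar>fst z - u0\<bar> < \<epsilon>}"
  show ?thesis
  proof (rule hyperbolic_form_near_from_chart[OF hs AB _ _ _ _ _ _ _ _ _ _ _ _ _ _ _ _,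
        where X="\<lambda>\<sigma> t. t" and Y="\<lambda>\<sigma> t. e * sqrt (t\<^sup>2 - \<sigma>)" and J=J and I=I and \<tau>=u0 and V=V])
    show "convex J" "open J" "convex I" "open I" "u0 \<in> I"
      using \<epsilon> unfolding J_def I_def by auto
    show "0 \<notin> J" using J_neg[of 0] by blast
    show "(t, e * sqrt (t\<^sup>2 - \<sigma>)) \<in> \<Omega>" if "\<sigma> \<in> J" "t \<in> I" for \<sigma> t
      using \<delta>(2) that unfolding inJ inI \<epsilon>_def by auto
    show "t\<^sup>2 - (e * sqrt (t\<^sup>2 - \<sigma>))\<^sup>2 = \<sigma>" if "\<sigma> \<in> J" "t \<in> I" for \<sigma> t
      using sq[OF that(1), of t] e2 by (simp add: power_mult_distrib power2_eq_square[of e])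
    show "(\<lambda>t. e * sqrt (t\<^sup>2 - \<sigma>)) differentiable (at t)"
      and "(\<lambda>\<sigma>. e * sqrt (u0\<^sup>2 - \<sigma>)) differentiable (at \<sigma>)" if "\<sigma> \<in> J" for \<sigma> t
      using sq[OF that, of t] sq[OF that, of u0]
      by (auto intro!: derivative_eq_intros DERIV_real_sqrt_generic simp: real_differentiable_def)
    show "(\<lambda>t. t) differentiable (at t)" "(\<lambda>\<sigma>. u0) differentiable (at \<sigma>)" for \<sigma> t :: real
      by simp_all
    show "open V" unfolding V_def by (intro open_Collect_conj open_Collect_less continuous_intros)
    show "(u0, q0) \<in> V" unfolding V_def s0_def using e1 \<epsilon> by simp
    show "\<exists>\<sigma>\<in>J. \<exists>t\<in>I. z = (t, e * sqrt (t\<^sup>2 - \<sigma>))" if "z \<in> V" for z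
    proof (intro bexI)
      have "e * sqrt ((snd z)\<^sup>2) = snd z"
        using sgn_mult_abs_eq[OF e1(1)] that unfolding V_def by simp
      then show "z = (fst z, e * sqrt ((fst z)\<^sup>2 - ((fst z)\<^sup>2 - (snd z)\<^sup>2)))" by (cases z) simp
    qed (use that in \<open>auto simp: V_def inJ inI\<close>)
    have y: "differentiable_upto n J (\<lambda>\<sigma>. e * sqrt (u0\<^sup>2 - \<sigma>))" for n
      by (rule differentiable_upto_mult[OF _ differentiable_upto_const
            differentiable_upto_compose[OF _ open_Collect_less differentiable_upto_sqrt
              differentiable_upto_diff[OF _ differentiable_upto_const differentiable_upto_id]]])
        (use sq in \<open>auto simp: J_def intro: continuous_intros\<close>)
    show "differentiable_upto n J (\<lambda>\<sigma>. invariant_R h (u0, e * sqrt (u0\<^sup>2 - \<sigma>)))" for n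
      by (rule differentiable_upto_invariant_R_slice_snd[OF S hs _ y])
        (use \<delta>(2) \<epsilon> in \<open>auto simp: J_def \<epsilon>_def dist_real_def abs_minus_commute\<close>)
  qed
qed

lemma euler_AB_zero_imp_hyperbolic_form:
  assumes "open \<Omega>" "\<Omega> \<subseteq> {(a, b). a\<^sup>2 \<noteq> b\<^sup>2}" "smooth2_on \<Omega> h"
    and "\<forall>w\<in>\<Omega>. euler_A h w = 0 \<and> euler_B h w = 0" and "w \<in> \<Omega>"
  shows "hyperbolic_form_near \<Omega> h w"
proof -
  obtain u0 q0 where w: "w = (u0, q0)" by fastforce
  then have "u0\<^sup>2 - q0\<^sup>2 > 0 \<or> u0\<^sup>2 - q0\<^sup>2 < 0" using assms(2,5) by auto
  then show ?thesis
    using hyperbolic_form_near_u_dominant[OF assms(1,3,4)]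
      hyperbolic_form_near_p_dominant[OF assms(1,3,4)] assms(5)
    unfolding w by blast
qed

section \<open>Functions of hyperbolic form satisfy \<open>A = B = 0\<close>\<close>

lemma DERIV_chain_on:
  assumes "\<forall>x\<in>T. (k has_real_derivative k' x) (at x)" "(g has_real_derivative g') (at t)"
    and "g t \<in> T" "D = k' (g t) * g'"
  shows "((\<lambda>t. k (g t)) has_real_derivative D) (at t)"
  using DERIV_chain2[of k "k' (g t)" g t g'] assms by auto

text \<open>\<open>hyp_q u p = u / (u\<^sup>2 - p\<^sup>2)\<close> is the coefficient of \<open>k\<^sub>0\<close>; the other four are the rational
  functions occurring in its first and second partial derivatives.\<close>

definition hyp_q :: "real \<Rightarrow> real \<Rightarrow> real" where "hyp_q a b = a / (a\<^sup>2 - b\<^sup>2)"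
definition hyp_P :: "real \<Rightarrow> real \<Rightarrow> real" where "hyp_P a b = (a\<^sup>2 + b\<^sup>2) / (a\<^sup>2 - b\<^sup>2)\<^sup>2"
definition hyp_R :: "real \<Rightarrow> real \<Rightarrow> real" where "hyp_R a b = a * b / (a\<^sup>2 - b\<^sup>2)\<^sup>2"
definition hyp_A :: "real \<Rightarrow> real \<Rightarrow> real" where "hyp_A a b = a * (a\<^sup>2 + 3 * b\<^sup>2) / (a\<^sup>2 - b\<^sup>2)^3"
definition hyp_B :: "real \<Rightarrow> real \<Rightarrow> real" where "hyp_B a b = b * (3 * a\<^sup>2 + b\<^sup>2) / (a\<^sup>2 - b\<^sup>2)^3"

lemma DERIV_hyp_q_fst:
  assumes "x\<^sup>2 - y\<^sup>2 \<noteq> (0::real)" "D = - hyp_P x y"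
  shows "((\<lambda>t. hyp_q t y) has_real_derivative D) (at x)"
proof -
  have "((\<lambda>t. t / (t\<^sup>2 - y\<^sup>2)) has_real_derivative
      (1 * (x\<^sup>2 - y\<^sup>2) - x * (2 * x)) / ((x\<^sup>2 - y\<^sup>2) * (x\<^sup>2 - y\<^sup>2))) (at x)"
    by (rule DERIV_divide) (use assms in \<open>auto intro!: derivative_eq_intros\<close>)
  moreover have "(1 * (x\<^sup>2 - y\<^sup>2) - x * (2 * x)) / ((x\<^sup>2 - y\<^sup>2) * (x\<^sup>2 - y\<^sup>2)) = D"
    unfolding assms(2) hyp_P_def using assms(1)
    by (simp add: divide_simps) (simp add: algebra_simps power2_eq_square)
  ultimately show ?thesis unfolding hyp_q_def by simp
qed

lemma DERIV_hyp_q_snd: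
  assumes "x\<^sup>2 - y\<^sup>2 \<noteq> (0::real)" "D = 2 * hyp_R x y"
  shows "((\<lambda>t. hyp_q x t) has_real_derivative D) (at y)"
proof -
  have "((\<lambda>t. x / (x\<^sup>2 - t\<^sup>2)) has_real_derivative
      (0 * (x\<^sup>2 - y\<^sup>2) - x * (0 - 2 * y)) / ((x\<^sup>2 - y\<^sup>2) * (x\<^sup>2 - y\<^sup>2))) (at y)"
    by (rule DERIV_divide) (use assms in \<open>auto intro!: derivative_eq_intros\<close>)
  moreover have "(0 * (x\<^sup>2 - y\<^sup>2) - x * (0 - 2 * y)) / ((x\<^sup>2 - y\<^sup>2) * (x\<^sup>2 - y\<^sup>2)) = D"
    unfolding assms(2) hyp_R_def using assms(1)
    by (simp add: divide_simps) (simp add: algebra_simps power2_eq_square)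
  ultimately show ?thesis unfolding hyp_q_def by simp
qed

lemma DERIV_hyp_P_fst:
  assumes "x\<^sup>2 - y\<^sup>2 \<noteq> (0::real)" "D = - 2 * hyp_A x y"
  shows "((\<lambda>t. hyp_P t y) has_real_derivative D) (at x)"
proof -
  have "((\<lambda>t. (t\<^sup>2 + y\<^sup>2) / (t\<^sup>2 - y\<^sup>2)\<^sup>2) has_real_derivative
      ((2 * x) * (x\<^sup>2 - y\<^sup>2)\<^sup>2 - (x\<^sup>2 + y\<^sup>2) * (2 * (x\<^sup>2 - y\<^sup>2) * (2 * x))) / ((x\<^sup>2 - y\<^sup>2)\<^sup>2 * (x\<^sup>2 - y\<^sup>2)\<^sup>2)) (at x)"
    by (rule DERIV_divide) (use assms in \<open>auto intro!: derivative_eq_intros\<close>)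
  moreover have "((2 * x) * (x\<^sup>2 - y\<^sup>2)\<^sup>2 - (x\<^sup>2 + y\<^sup>2) * (2 * (x\<^sup>2 - y\<^sup>2) * (2 * x))) / ((x\<^sup>2 - y\<^sup>2)\<^sup>2 * (x\<^sup>2 - y\<^sup>2)\<^sup>2) = D"
    unfolding assms(2) hyp_A_def using assms(1)
    by (simp add: divide_simps) (simp add: algebra_simps eval_nat_numeral)
  ultimately show ?thesis unfolding hyp_P_def by simp
qed

lemma DERIV_hyp_P_snd:
  assumes "x\<^sup>2 - y\<^sup>2 \<noteq> (0::real)" "D = 2 * hyp_B x y"
  shows "((\<lambda>t. hyp_P x t) has_real_derivative D) (at y)"
proof -
  have "((\<lambda>t. (x\<^sup>2 + t\<^sup>2) / (x\<^sup>2 - t\<^sup>2)\<^sup>2) has_real_derivative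
      ((2 * y) * (x\<^sup>2 - y\<^sup>2)\<^sup>2 - (x\<^sup>2 + y\<^sup>2) * (2 * (x\<^sup>2 - y\<^sup>2) * (0 - 2 * y))) / ((x\<^sup>2 - y\<^sup>2)\<^sup>2 * (x\<^sup>2 - y\<^sup>2)\<^sup>2)) (at y)"
    by (rule DERIV_divide) (use assms in \<open>auto intro!: derivative_eq_intros\<close>)
  moreover have "((2 * y) * (x\<^sup>2 - y\<^sup>2)\<^sup>2 - (x\<^sup>2 + y\<^sup>2) * (2 * (x\<^sup>2 - y\<^sup>2) * (0 - 2 * y))) / ((x\<^sup>2 - y\<^sup>2)\<^sup>2 * (x\<^sup>2 - y\<^sup>2)\<^sup>2) = D"
    unfolding assms(2) hyp_B_def using assms(1)
    by (simp add: divide_simps) (simp add: algebra_simps eval_nat_numeral)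
  ultimately show ?thesis unfolding hyp_P_def by simp
qed

lemma DERIV_hyp_R_fst:
  assumes "x\<^sup>2 - y\<^sup>2 \<noteq> (0::real)" "D = - hyp_B x y"
  shows "((\<lambda>t. hyp_R t y) has_real_derivative D) (at x)"
proof -
  have "((\<lambda>t. t * y / (t\<^sup>2 - y\<^sup>2)\<^sup>2) has_real_derivative
      ((1 * y) * (x\<^sup>2 - y\<^sup>2)\<^sup>2 - (x * y) * (2 * (x\<^sup>2 - y\<^sup>2) * (2 * x))) / ((x\<^sup>2 - y\<^sup>2)\<^sup>2 * (x\<^sup>2 - y\<^sup>2)\<^sup>2)) (at x)"
    by (rule DERIV_divide) (use assms in \<open>auto intro!: derivative_eq_intros\<close>)
  moreover have "((1 * y) * (x\<^sup>2 - y\<^sup>2)\<^sup>2 - (x * y) * (2 * (x\<^sup>2 - y\<^sup>2) * (2 * x))) / ((x\<^sup>2 - y\<^sup>2)\<^sup>2 * (x\<^sup>2 - y\<^sup>2)\<^sup>2) = D"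
    unfolding assms(2) hyp_B_def using assms(1)
    by (simp add: divide_simps) (simp add: algebra_simps eval_nat_numeral)
  ultimately show ?thesis unfolding hyp_R_def by simp
qed

lemma DERIV_hyp_R_snd:
  assumes "x\<^sup>2 - y\<^sup>2 \<noteq> (0::real)" "D = hyp_A x y"
  shows "((\<lambda>t. hyp_R x t) has_real_derivative D) (at y)"
proof -
  have "((\<lambda>t. x * t / (x\<^sup>2 - t\<^sup>2)\<^sup>2) has_real_derivative
      ((x * 1) * (x\<^sup>2 - y\<^sup>2)\<^sup>2 - (x * y) * (2 * (x\<^sup>2 - y\<^sup>2) * (0 - 2 * y))) / ((x\<^sup>2 - y\<^sup>2)\<^sup>2 * (x\<^sup>2 - y\<^sup>2)\<^sup>2)) (at y)"
    by (rule DERIV_divide) (use assms in \<open>auto intro!: derivative_eq_intros\<close>)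
  moreover have "((x * 1) * (x\<^sup>2 - y\<^sup>2)\<^sup>2 - (x * y) * (2 * (x\<^sup>2 - y\<^sup>2) * (0 - 2 * y))) / ((x\<^sup>2 - y\<^sup>2)\<^sup>2 * (x\<^sup>2 - y\<^sup>2)\<^sup>2) = D"
    unfolding assms(2) hyp_A_def using assms(1)
    by (simp add: divide_simps) (simp add: algebra_simps eval_nat_numeral)
  ultimately show ?thesis unfolding hyp_R_def by simp
qed

lemma hyp_P_eq: "x\<^sup>2 - y\<^sup>2 \<noteq> (0::real) \<Longrightarrow> hyp_P x y = x * hyp_A x y - y * hyp_B x y"
  unfolding hyp_P_def hyp_A_def hyp_B_def
  by (simp add: divide_simps) (simp add: algebra_simps eval_nat_numeral)

lemma hyp_q_eq:
  "x\<^sup>2 - y\<^sup>2 \<noteq> (0::real) \<Longrightarrow>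
    hyp_q x y = x * hyp_P x y - 2 * x * y * hyp_B x y + 2 * y * hyp_R x y + 2 * y\<^sup>2 * hyp_A x y"
  unfolding hyp_q_def hyp_P_def hyp_A_def hyp_B_def hyp_R_def
  by (simp add: divide_simps) (simp add: algebra_simps eval_nat_numeral)

lemma smooth1_on_DERIV_higher_deriv:
  "smooth1_on T k \<Longrightarrow> x \<in> T \<Longrightarrow> ((deriv ^^ n) k has_real_derivative (deriv ^^ Suc n) k x) (at x)"
  unfolding smooth1_on_def by (simp add: real_differentiable_DERIV_deriv)

lemma hyperbolic_form_imp_euler_AB_zero:
  assumes "\<Omega> \<subseteq> {(a, b). a\<^sup>2 \<noteq> b\<^sup>2}" "hyperbolic_form_near \<Omega> h w"
  shows "euler_A h w = 0 \<and> euler_B h w = 0"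
proof -
  obtain V k1 k0 T where oV: "open V" and w: "w \<in> V" "V \<subseteq> \<Omega>"
    and VT: "(\<lambda>(a, b). a\<^sup>2 - b\<^sup>2) ` V \<subseteq> T" and sk: "smooth1_on T k1"
    and rep: "\<forall>(a, b)\<in>V. h (a, b) = b * k1 (a\<^sup>2 - b\<^sup>2) + k0 * a / (a\<^sup>2 - b\<^sup>2)"
    using assms(2) unfolding hyperbolic_form_near_def by blast
  obtain a0 b0 where w0: "w = (a0, b0)" by fastforce
  define K1 where "K1 = deriv k1"
  define K2 where "K2 = deriv K1"
  have dk: "\<forall>x\<in>T. (k1 has_real_derivative K1 x) (at x)"
    and dk1: "\<forall>x\<in>T. (K1 has_real_derivative K2 x) (at x)"
    using smooth1_on_DERIV_higher_deriv[OF sk, of _ 0] smooth1_on_DERIV_higher_deriv[OF sk, of _ 1]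
    unfolding K1_def K2_def by simp_all
  define F where "F = (\<lambda>a b. b * k1 (a\<^sup>2 - b\<^sup>2) + k0 * hyp_q a b)"
  define Fu where "Fu = (\<lambda>a b. 2 * a * b * K1 (a\<^sup>2 - b\<^sup>2) - k0 * hyp_P a b)"
  define Fp where "Fp = (\<lambda>a b. k1 (a\<^sup>2 - b\<^sup>2) - 2 * b\<^sup>2 * K1 (a\<^sup>2 - b\<^sup>2) + 2 * k0 * hyp_R a b)"
  define Fuu where
    "Fuu = (\<lambda>a b. 2 * b * K1 (a\<^sup>2 - b\<^sup>2) + 4 * a\<^sup>2 * b * K2 (a\<^sup>2 - b\<^sup>2) + 2 * k0 * hyp_A a b)"
  define Fup where
    "Fup = (\<lambda>a b. 2 * a * K1 (a\<^sup>2 - b\<^sup>2) - 4 * a * b\<^sup>2 * K2 (a\<^sup>2 - b\<^sup>2) - 2 * k0 * hyp_B a b)"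
  define Fpp where
    "Fpp = (\<lambda>a b. - 6 * b * K1 (a\<^sup>2 - b\<^sup>2) + 4 * b^3 * K2 (a\<^sup>2 - b\<^sup>2) + 2 * k0 * hyp_A a b)"
  have sT: "x\<^sup>2 - y\<^sup>2 \<in> T" if "(x, y) \<in> V" for x y using VT that by force
  have s0: "x\<^sup>2 - y\<^sup>2 \<noteq> 0" if "(x, y) \<in> V" for x y using assms(1) w(2) that by force
  have r0: "h (x, y) = F x y" if "(x, y) \<in> V" for x y
    using rep that unfolding F_def hyp_q_def by auto
  have D1: "((\<lambda>t. F t y) has_real_derivative Fu x y) (at x)" if "(x, y) \<in> V" for x y
    unfolding F_def Fu_def using sT[OF that] s0[OF that]
    by (auto intro!: derivative_eq_intros DERIV_chain_on[OF dk] DERIV_hyp_q_fst simp: algebra_simps)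
  have D2: "((\<lambda>t. F x t) has_real_derivative Fp x y) (at y)" if "(x, y) \<in> V" for x y
    unfolding F_def Fp_def using sT[OF that] s0[OF that]
    by (auto intro!: derivative_eq_intros DERIV_chain_on[OF dk] DERIV_hyp_q_snd
        simp: algebra_simps power2_eq_square)
  have D3: "((\<lambda>t. Fu t y) has_real_derivative Fuu x y) (at x)" if "(x, y) \<in> V" for x y
    unfolding Fu_def Fuu_def using sT[OF that] s0[OF that]
    by (auto intro!: derivative_eq_intros DERIV_chain_on[OF dk1] DERIV_hyp_P_fst
        simp: algebra_simps power2_eq_square)
  have D4: "((\<lambda>t. Fu x t) has_real_derivative Fup x y) (at y)" if "(x, y) \<in> V" for x y
    unfolding Fu_def Fup_def using sT[OF that] s0[OF that]
    by (auto intro!: derivative_eq_intros DERIV_chain_on[OF dk1] DERIV_hyp_P_snd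
        simp: algebra_simps power2_eq_square)
  have D5: "((\<lambda>t. Fp t y) has_real_derivative Fup x y) (at x)" if "(x, y) \<in> V" for x y
    unfolding Fp_def Fup_def using sT[OF that] s0[OF that]
    by (auto intro!: derivative_eq_intros DERIV_chain_on[OF dk] DERIV_chain_on[OF dk1]
        DERIV_hyp_R_fst simp: algebra_simps power2_eq_square)
  have D6: "((\<lambda>t. Fp x t) has_real_derivative Fpp x y) (at y)" if "(x, y) \<in> V" for x y
    unfolding Fp_def Fpp_def using sT[OF that] s0[OF that]
    by (auto intro!: derivative_eq_intros DERIV_chain_on[OF dk] DERIV_chain_on[OF dk1]
        DERIV_hyp_R_snd simp: algebra_simps power2_eq_square power3_eq_cube)
  have hF1: "pd1 h (x, y) = Fu x y" if "(x, y) \<in> V" for x y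
    by (rule pd1_eq_DERIV_locally[OF oV that r0 D1[OF that]])
  have hF2: "pd2 h (x, y) = Fp x y" if "(x, y) \<in> V" for x y
    by (rule pd2_eq_DERIV_locally[OF oV that r0 D2[OF that]])
  have w': "(a0, b0) \<in> V" using w(1) w0 by simp
  have e1: "pd1 h (a0, b0) = Fu a0 b0" and e2: "pd2 h (a0, b0) = Fp a0 b0"
    using hF1 hF2 w' by blast+
  have e3: "pd1 (pd1 h) (a0, b0) = Fuu a0 b0" by (rule pd1_eq_DERIV_locally[OF oV w' hF1 D3[OF w']])
  have e4: "pd2 (pd1 h) (a0, b0) = Fup a0 b0" by (rule pd2_eq_DERIV_locally[OF oV w' hF1 D4[OF w']])
  have e5: "pd1 (pd2 h) (a0, b0) = Fup a0 b0" by (rule pd1_eq_DERIV_locally[OF oV w' hF2 D5[OF w']])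
  have e6: "pd2 (pd2 h) (a0, b0) = Fpp a0 b0" by (rule pd2_eq_DERIV_locally[OF oV w' hF2 D6[OF w']])
  have e0: "h (a0, b0) = F a0 b0" using r0 w' by blast
  note i1 = hyp_P_eq[OF s0[OF w']]
  note i2 = hyp_q_eq[OF s0[OF w']]
  show ?thesis unfolding w0
  proof
    show "euler_A h (a0, b0) = 0" unfolding euler_A_def fst_conv snd_conv e1 e4 e6
      by (simp add: Fu_def Fup_def Fpp_def i1 algebra_simps power2_eq_square power3_eq_cube)
    show "euler_B h (a0, b0) = 0" unfolding euler_B_def fst_conv snd_conv e0 e1 e2 e3 e5
      by (simp add: F_def Fu_def Fp_def Fuu_def Fup_def i2 i1
          algebra_simps power2_eq_square power3_eq_cube)
  qed
qed

section \<open>\<open>k\<close> as a total derivative\<close>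

lemma DERIV_ln_abs:
  fixes f :: "real \<Rightarrow> real"
  assumes f: "(f has_real_derivative d) (at x)" and nz: "f x \<noteq> 0"
  shows "((\<lambda>t. ln \<bar>f t\<bar>) has_real_derivative d / f x) (at x)"
proof -
  have ln_abs: "ln \<bar>y\<bar> = ln (y\<^sup>2) / 2" for y :: real
  proof (cases "y = 0")
    case False
    then have "ln (\<bar>y\<bar> ^ 2) = 2 * ln \<bar>y\<bar>" by (subst ln_realpow) auto
    then show ?thesis by simp
  qed simp
  have "(\<lambda>t. ln \<bar>f t\<bar>) = (\<lambda>t. ln ((f t)\<^sup>2) / 2)" by (simp only: ln_abs)
  moreover have "((\<lambda>t. ln ((f t)\<^sup>2) / 2) has_real_derivative d / f x) (at x)"
    using nz
    by (auto intro!: derivative_eq_intros f simp: field_simps power2_eq_square zero_less_mult_iff)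
  ultimately show ?thesis by simp
qed

lemma kfun_hyperbolic_form_eq_tdx:
  fixes k1 K1 :: "real \<Rightarrow> real" and U :: "nat \<Rightarrow> real"
  assumes K: "(K1 has_real_derivative k1 ((U 0)\<^sup>2 - (U 1)\<^sup>2)) (at ((U 0)\<^sup>2 - (U 1)\<^sup>2))"
    and nz: "(U 0)\<^sup>2 \<noteq> (U 1)\<^sup>2"
  shows "kfun (\<lambda>(a, b). b * k1 (a\<^sup>2 - b\<^sup>2) + k0 * a / (a\<^sup>2 - b\<^sup>2)) (\<lambda>_. 0) (\<lambda>_. 0) x U =
    tdx 1 (\<lambda>y V. K1 ((V 0)\<^sup>2 - (V 1)\<^sup>2) / 2 + k0 / 2 * ln \<bar>(V 0 - V 1) / (V 0 + V 1)\<bar> + k0 * y) x U"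
proof -
  define u p where "u = U 0" and "p = U 1"
  define s where "s = u\<^sup>2 - p\<^sup>2"
  have s0: "s \<noteq> 0" using nz unfolding s_def u_def p_def by auto
  have sf: "s = (u + p) * (u - p)" unfolding s_def by (simp add: power2_eq_square algebra_simps)
  have up: "u + p \<noteq> 0" "u - p \<noteq> 0" using s0 unfolding sf by auto
  have KD: "(K1 has_real_derivative k1 s) (at s)" using K unfolding s_def u_def p_def .
  define F where "F = (\<lambda>y (V :: nat \<Rightarrow> real). K1 ((V 0)\<^sup>2 - (V 1)\<^sup>2) / 2
                     + k0 / 2 * ln \<bar>(V 0 - V 1) / (V 0 + V 1)\<bar> + k0 * (y::real))"
  have dx: "deriv (\<lambda>t. F t U) x = k0"
    by (rule DERIV_imp_deriv) (auto simp: F_def intro!: derivative_eq_intros)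
  have d0: "pdu 0 F x U = k1 s * u + k0 * p / s"
  proof (rule pdu_eq_DERIV)
    have e: "(\<lambda>t. F x (U(0 := t))) =
        (\<lambda>t. K1 (t\<^sup>2 - p\<^sup>2) / 2 + k0 / 2 * ln \<bar>(t - p) / (t + p)\<bar> + k0 * x)"
      by (simp add: F_def p_def)
    have q: "((\<lambda>t. (t - p) / (t + p)) has_real_derivative 2 * p / (u + p)^2) (at u)"
      using up by (auto intro!: derivative_eq_intros simp: field_simps power2_eq_square)
    have l: "((\<lambda>t. ln \<bar>(t - p) / (t + p)\<bar>) has_real_derivative
        (2 * p / (u + p)^2) / ((u - p) / (u + p))) (at u)"
      by (rule DERIV_ln_abs[OF q]) (use up in simp)
    have k: "((\<lambda>t. K1 (t\<^sup>2 - p\<^sup>2)) has_real_derivative k1 s * (2 * u)) (at u)"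
      by (rule DERIV_chain2[of K1 "k1 s" "\<lambda>t. t\<^sup>2 - p\<^sup>2"])
        (use KD in \<open>auto intro!: derivative_eq_intros simp: s_def\<close>)
    have "((\<lambda>t. K1 (t\<^sup>2 - p\<^sup>2) / 2 + k0 / 2 * ln \<bar>(t - p) / (t + p)\<bar> + k0 * x) has_real_derivative
        k1 s * (2 * u) / 2 + k0 / 2 * ((2 * p / (u + p)^2) / ((u - p) / (u + p))) + 0) (at u)"
      by (intro DERIV_add DERIV_cdivide k DERIV_cmult l DERIV_const)
    moreover have "k1 s * (2 * u) / 2 + k0 / 2 * ((2 * p / (u + p)^2) / ((u - p) / (u + p))) + 0
        = k1 s * u + k0 * p / s"
    proof -
      have r: "(2 * p / (u + p)^2) / ((u - p) / (u + p)) = 2 * p / s"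
        using up unfolding sf by (simp add: divide_simps power2_eq_square)
      show ?thesis unfolding r using s0 by (simp add: divide_simps)
    qed
    ultimately show "((\<lambda>t. F x (U(0 := t))) has_real_derivative k1 s * u + k0 * p / s) (at (U 0))"
      unfolding e u_def by simp
  qed
  have d1: "pdu 1 F x U = - k1 s * p - k0 * u / s"
  proof (rule pdu_eq_DERIV)
    have e: "(\<lambda>t. F x (U(1 := t))) =
        (\<lambda>t. K1 (u\<^sup>2 - t\<^sup>2) / 2 + k0 / 2 * ln \<bar>(u - t) / (u + t)\<bar> + k0 * x)"
      by (simp add: F_def u_def)
    have q: "((\<lambda>t. (u - t) / (u + t)) has_real_derivative - 2 * u / (u + p)^2) (at p)"
      using up by (auto intro!: derivative_eq_intros simp: field_simps power2_eq_square)
    have l: "((\<lambda>t. ln \<bar>(u - t) / (u + t)\<bar>) has_real_derivative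
        (- 2 * u / (u + p)^2) / ((u - p) / (u + p))) (at p)"
      by (rule DERIV_ln_abs[OF q]) (use up in simp)
    have k: "((\<lambda>t. K1 (u\<^sup>2 - t\<^sup>2)) has_real_derivative k1 s * (- 2 * p)) (at p)"
      by (rule DERIV_chain2[of K1 "k1 s" "\<lambda>t. u\<^sup>2 - t\<^sup>2"])
        (use KD in \<open>auto intro!: derivative_eq_intros simp: s_def\<close>)
    have "((\<lambda>t. K1 (u\<^sup>2 - t\<^sup>2) / 2 + k0 / 2 * ln \<bar>(u - t) / (u + t)\<bar> + k0 * x) has_real_derivative
        k1 s * (- 2 * p) / 2 + k0 / 2 * ((- 2 * u / (u + p)^2) / ((u - p) / (u + p))) + 0) (at p)"
      by (intro DERIV_add DERIV_cdivide k DERIV_cmult l DERIV_const)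
    moreover have "k1 s * (- 2 * p) / 2 + k0 / 2 * ((- 2 * u / (u + p)^2) / ((u - p) / (u + p))) + 0
        = - k1 s * p - k0 * u / s"
    proof -
      have r: "(- 2 * u / (u + p)^2) / ((u - p) / (u + p)) = - 2 * u / s"
        using up unfolding sf by (simp add: divide_simps power2_eq_square)
      show ?thesis unfolding r using s0 by (simp add: divide_simps)
    qed
    ultimately show "((\<lambda>t. F x (U(1 := t))) has_real_derivative - k1 s * p - k0 * u / s) (at (U 1))"
      unfolding e p_def by simp
  qed
  have "tdx 1 F x U = k0 + p * (k1 s * u + k0 * p / s) + U 2 * (- k1 s * p - k0 * u / s)"
    unfolding tdx_def dx using d0 d1 by (simp add: p_def One_nat_def numeral_2_eq_2)
  also have "\<dots> = (p * k1 s + k0 * u / s) * (u - U 2)"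
    using s0 by (simp add: divide_simps, simp add: s_def algebra_simps power2_eq_square)
  finally show ?thesis
    unfolding F_def[symmetric] kfun_def by (simp add: u_def p_def s_def)
qed

lemma euler_kfun_vanishes_iff:
  assumes "open \<Omega>" "\<Omega> \<subseteq> {(a, b). a\<^sup>2 \<noteq> b\<^sup>2}" "smooth2_on \<Omega> h1"
  shows "(\<forall>x U. (U 0, U 1) \<in> \<Omega> \<longrightarrow> euler 2 (kfun h1 h2 h3) x U = 0) \<longleftrightarrow>
    (\<forall>w\<in>\<Omega>. h2 w = 0 \<and> h3 w = 0) \<and> (\<forall>w\<in>\<Omega>. hyperbolic_form_near \<Omega> h1 w)"
proof
  assume E: "\<forall>x U. (U 0, U 1) \<in> \<Omega> \<longrightarrow> euler 2 (kfun h1 h2 h3) x U = 0"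
  have z: "\<forall>w\<in>\<Omega>. h2 w = 0 \<and> h3 w = 0"
    using euler_kfun_zero_imp_quadratic_cubic_zero[OF E] by blast
  have "\<forall>w\<in>\<Omega>. euler_A h1 w = 0 \<and> euler_B h1 w = 0"
    using euler_kfun_zero_iff_euler_AB_zero[OF assms(1,3) z] E by (rule iffD1)
  with z show "(\<forall>w\<in>\<Omega>. h2 w = 0 \<and> h3 w = 0) \<and> (\<forall>w\<in>\<Omega>. hyperbolic_form_near \<Omega> h1 w)"
    using euler_AB_zero_imp_hyperbolic_form[OF assms] by simp
next
  assume R: "(\<forall>w\<in>\<Omega>. h2 w = 0 \<and> h3 w = 0) \<and> (\<forall>w\<in>\<Omega>. hyperbolic_form_near \<Omega> h1 w)"
  then have "\<forall>w\<in>\<Omega>. euler_A h1 w = 0 \<and> euler_B h1 w = 0"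
    using hyperbolic_form_imp_euler_AB_zero[OF assms(2)] by simp
  with R show "\<forall>x U. (U 0, U 1) \<in> \<Omega> \<longrightarrow> euler 2 (kfun h1 h2 h3) x U = 0"
    using euler_kfun_zero_iff_euler_AB_zero[OF assms(1,3)] by simp
qed

theorem lemma3:
  fixes \<Omega> :: "(real \<times> real) set"
  assumes "open \<Omega>" and "\<Omega> \<subseteq> {(a, b). a\<^sup>2 \<noteq> b\<^sup>2}"
  shows
   "(\<forall>h1 h2 h3. smooth2_on \<Omega> h1 \<and> smooth2_on \<Omega> h2 \<and> smooth2_on \<Omega> h3 \<longrightarrow>
      ((\<forall>x U. (U 0, U 1) \<in> \<Omega> \<longrightarrow> euler 2 (kfun h1 h2 h3) x U = 0) \<longleftrightarrow>
       ((\<forall>p\<in>\<Omega>. h2 p = 0 \<and> h3 p = 0) \<and>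
        (\<forall>p\<in>\<Omega>. \<exists>V. open V \<and> p \<in> V \<and> V \<subseteq> \<Omega> \<and>
           (\<exists>(k1 :: real \<Rightarrow> real) (k0 :: real) T. open T \<and> (\<lambda>(a, b). a\<^sup>2 - b\<^sup>2) ` V \<subseteq> T \<and>
              smooth1_on T k1 \<and>
              (\<forall>(a, b)\<in>V. h1 (a, b) = b * k1 (a\<^sup>2 - b\<^sup>2) + k0 * a / (a\<^sup>2 - b\<^sup>2)))))))
    \<and>
    (\<forall>(k1 :: real \<Rightarrow> real) (K1 :: real \<Rightarrow> real) (k0 :: real).
      (\<forall>(a, b)\<in>\<Omega>. (K1 has_real_derivative k1 (a\<^sup>2 - b\<^sup>2)) (at (a\<^sup>2 - b\<^sup>2))) \<longrightarrow>
      (\<forall>x U. (U 0, U 1) \<in> \<Omega> \<longrightarrow>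
         kfun (\<lambda>(a, b). b * k1 (a\<^sup>2 - b\<^sup>2) + k0 * a / (a\<^sup>2 - b\<^sup>2)) (\<lambda>_. 0) (\<lambda>_. 0) x U =
         tdx 1 (\<lambda>y V. K1 ((V 0)\<^sup>2 - (V 1)\<^sup>2) / 2
                     + k0 / 2 * ln \<bar>(V 0 - V 1) / (V 0 + V 1)\<bar> + k0 * y) x U))"
  apply (intro conjI allI impI)
  subgoal by (rule euler_kfun_vanishes_iff[OF assms, unfolded hyperbolic_form_near_def]) simp
  subgoal premises prems
    using bspec[OF prems(1) prems(2)] prems(2) assms(2)
    by (intro kfun_hyperbolic_form_eq_tdx) auto
  done

end
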